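(* Let $\Gamma$ be a countable amenable group. Then the action $\Gamma\curvearrowright\beta\Gamma$ has dynamical comparison. Consequently, for any two subsets $A,B$ of $\Gamma$ such that $\mu(A)<\mu(B)$ for every $\Gamma$-invariant finitely additive probability measure $\mu$ on $\Gamma$, there exist $A_1,\dots,A_n\subseteq\Gamma$ and $\gamma_1,\dots,\gamma_n\in\Gamma$ with $A=\bigsqcup_{i=1}^nA_i$ and $\bigsqcup_{i=1}^n\gamma_iA_i\subseteq B$.
   Context: $\beta\Gamma$ is the Stone–Čech compactification of the discrete group $\Gamma$, on which $\Gamma$ acts by extending left translation. For an action $\alpha$ of $\Gamma$ on a compact Hausdorff $0$-dimensional space $X$, dynamical comparison means: for all nonempty clopen $A,B\subseteq X$ with $\mu(A)<\mu(B)$ for every $\alpha$-invariant Radon probability measure $\mu$ on $X$, there exist a clopen partition $A=\bigsqcup_{i=1}^nA_i$ and $\gamma_1,\dots,\gamma_n\in\Gamma$ such that the sets $\alpha(\gamma_i)A_i$ are pairwise disjoint and contained in $B$ (equivalently $[A]\le[B]$ in the clopen type semigroup). In the second statement, the union $\bigsqcup_i \gamma_i A_i$ is a disjoint union. *)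

theory Defs
  imports "HOL-Analysis.Analysis" "HOL-Probability.Probability"
begin

definition borel_sets_of :: "'x topology \<Rightarrow> 'x set set" where
  "borel_sets_of X = sigma_sets (topspace X) (Collect (openin X))"

definition radon_prob :: "'x topology \<Rightarrow> 'x measure \<Rightarrow> bool" where
  "radon_prob X \<mu> \<longleftrightarrow>
     prob_space \<mu> \<and> space \<mu> = topspace X \<and> sets \<mu> = borel_sets_of X \<and>
     (\<forall>E \<in> sets \<mu>. emeasure \<mu> E = (INF U \<in> {U. openin X U \<and> E \<subseteq> U}. emeasure \<mu> U)) \<and>
     (\<forall>U. openin X U \<longrightarrow> emeasure \<mu> U = (SUP K \<in> {K. compactin X K \<and> K \<subseteq> U}. emeasure \<mu> K))"

definition action_invariant :: "('g \<Rightarrow> 'x \<Rightarrow> 'x) \<Rightarrow> 'x measure \<Rightarrow> bool" where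
  "action_invariant \<alpha> \<mu> \<longleftrightarrow>
     (\<forall>g E. E \<in> sets \<mu> \<longrightarrow> emeasure \<mu> (\<alpha> g ` E) = emeasure \<mu> E)"

definition clopenin :: "'x topology \<Rightarrow> 'x set \<Rightarrow> bool" where
  "clopenin X A \<longleftrightarrow> openin X A \<and> closedin X A"

definition dynamical_comparison :: "'x topology \<Rightarrow> ('g \<Rightarrow> 'x \<Rightarrow> 'x) \<Rightarrow> bool" where
  "dynamical_comparison X \<alpha> \<longleftrightarrow>
     (\<forall>A B. clopenin X A \<and> clopenin X B \<and> A \<noteq> {} \<and> B \<noteq> {} \<and>
        (\<forall>\<mu>. radon_prob X \<mu> \<and> action_invariant \<alpha> \<mu> \<longrightarrow> measure \<mu> A < measure \<mu> B) \<longrightarrow>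
        (\<exists>(n::nat) (P::nat \<Rightarrow> 'x set) (\<gamma>::nat \<Rightarrow> 'g).
            A = (\<Union>i<n. P i) \<and>
            (\<forall>i<n. clopenin X (P i)) \<and>
            (\<forall>i<n. \<forall>j<n. i \<noteq> j \<longrightarrow> P i \<inter> P j = {}) \<and>
            (\<forall>i<n. \<alpha> (\<gamma> i) ` P i \<subseteq> B) \<and>
            (\<forall>i<n. \<forall>j<n. i \<noteq> j \<longrightarrow> \<alpha> (\<gamma> i) ` P i \<inter> \<alpha> (\<gamma> j) ` P j = {})))"

text \<open>The group \<Gamma> is the type 'g (class group_add, written additively; not assumed
  commutative). Left translation by g is x \<mapsto> g + x.\<close>

definition fa_inv_prob :: "('g::group_add set \<Rightarrow> real) \<Rightarrow> bool" where
  "fa_inv_prob \<mu> \<longleftrightarrow>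
     \<mu> UNIV = 1 \<and> (\<forall>A. 0 \<le> \<mu> A) \<and>
     (\<forall>A B. A \<inter> B = {} \<longrightarrow> \<mu> (A \<union> B) = \<mu> A + \<mu> B) \<and>
     (\<forall>g A. \<mu> ((\<lambda>x. g + x) ` A) = \<mu> A)"

definition amenable :: "'g::group_add itself \<Rightarrow> bool" where
  "amenable _ \<longleftrightarrow> (\<exists>\<mu>::'g set \<Rightarrow> real. fa_inv_prob \<mu>)"

section \<open>Stone-Cech compactification as the space of ultrafilters\<close>

definition is_ultrafilter_on :: "'g set set \<Rightarrow> bool" where
  "is_ultrafilter_on U \<longleftrightarrow>
     {} \<notin> U \<and> UNIV \<in> U \<and>
     (\<forall>A B. A \<in> U \<and> B \<in> U \<longrightarrow> A \<inter> B \<in> U) \<and>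
     (\<forall>A B. A \<in> U \<and> A \<subseteq> B \<longrightarrow> B \<in> U) \<and>
     (\<forall>A. A \<in> U \<or> - A \<in> U)"

definition beta_space :: "'g set set set" where
  "beta_space = {U. is_ultrafilter_on U}"

definition beta_top :: "'g set set topology" where
  "beta_top = topology_generated_by {{U \<in> beta_space. A \<in> U} | A. True}"

definition beta_action :: "'g::group_add \<Rightarrow> 'g set set \<Rightarrow> 'g set set" where
  "beta_action g U = {(\<lambda>x. g + x) ` A | A. A \<in> U}"

end

(*
  Invariant means on the group correspond to invariant Radon probability measures on beta Gamma:
  the clopen subsets of beta Gamma are exactly the sets of ultrafilters containing a fixed A, and
  the measure of that set is the mean of A.  Dynamical comparison on beta Gamma therefore reduces
  to comparison of subsets of the group, the pieces being transported back the same way.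

  Suppose every invariant mean gives A less mass than B.  Then some finite window F sees, in every
  right translate F + x, fewer points of A than of B: otherwise the proportions of A and B in badly
  placed translates of Folner sets converge, along an ultrafilter, to an invariant mean giving B at
  most the mass of A.  Double counting over these windows verifies Hall's condition for the finite
  sets B \<inter> ((F - F) + a), a \<in> A, so Hall's marriage theorem (extended to infinite families by an
  ultrafilter compactness argument) gives an injection \<phi> : A \<rightarrow> B with \<phi> a - a in the finite
  set F - F.  Partitioning A according to the value of \<phi> a - a yields the pieces.  Folner sets
  exist because a finite L with |L + F| \<ge> 2|F| for all finite F would, again by Hall's theorem,
  yield a paradoxical decomposition of the group.
*)

theory Submission
  imports Defs "HOL-Library.Set_Algebras"
begin

section \<open>Ultrafilters\<close>

definition finite_intersection_property :: "'a set set \<Rightarrow> bool" where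
  "finite_intersection_property \<F> \<longleftrightarrow> (\<forall>\<G>. \<G> \<subseteq> \<F> \<and> finite \<G> \<longrightarrow> \<Inter>\<G> \<noteq> {})"

lemma finite_intersection_property_insert:
  assumes "finite_intersection_property \<F>"
    and "\<And>\<G>. \<G> \<subseteq> \<F> \<Longrightarrow> finite \<G> \<Longrightarrow> \<Inter>\<G> \<inter> X \<noteq> {}"
  shows "finite_intersection_property (insert X \<F>)"
  unfolding finite_intersection_property_def
proof (intro allI impI)
  fix \<G> assume \<G>: "\<G> \<subseteq> insert X \<F> \<and> finite \<G>"
  show "\<Inter>\<G> \<noteq> {}"
  proof (cases "X \<in> \<G>")
    case True
    then have "\<Inter>\<G> = \<Inter>(\<G> - {X}) \<inter> X" by auto
    then show ?thesis using assms(2)[of "\<G> - {X}"] \<G> by auto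
  next
    case False
    then show ?thesis using assms(1) \<G> unfolding finite_intersection_property_def by blast
  qed
qed

lemma maximal_fip_extension:
  assumes "finite_intersection_property \<F>"
  obtains M where "\<F> \<subseteq> M" "finite_intersection_property M"
    "\<And>X. (\<And>\<G>. \<G> \<subseteq> M \<Longrightarrow> finite \<G> \<Longrightarrow> \<Inter>\<G> \<inter> X \<noteq> {}) \<Longrightarrow> X \<in> M"
proof -
  define \<A> where "\<A> = {\<G>. \<F> \<subseteq> \<G> \<and> finite_intersection_property \<G>}"
  have "\<exists>U\<in>\<A>. \<forall>X\<in>C. X \<subseteq> U" if C: "C \<in> chains \<A>" for C
  proof (cases "C = {}")
    case True
    then show ?thesis using assms unfolding \<A>_def by auto
  next
    case False
    have "\<Union>C \<in> \<A>"
      unfolding \<A>_def finite_intersection_property_def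
    proof safe
      fix x assume "x \<in> \<F>"
      then show "x \<in> \<Union>C" using False C unfolding chains_def \<A>_def by blast
    next
      fix \<G> assume \<G>: "\<G> \<subseteq> \<Union>C" "finite \<G>" "\<Inter>\<G> = {}"
      have "subset.chain UNIV C" using C unfolding chains_def chain_subset_alt_def by auto
      then obtain B where "B \<in> C" "\<G> \<subseteq> B"
        using finite_subset_Union_chain[OF \<G>(2,1) False] by blast
      then show False
        using C \<G> unfolding chains_def \<A>_def finite_intersection_property_def by blast
    qed
    then show ?thesis by blast
  qed
  then obtain M where M: "M \<in> \<A>" "\<forall>X\<in>\<A>. M \<subseteq> X \<longrightarrow> X = M"
    using Zorn_Lemma2[of \<A>] by blast
  have fip: "finite_intersection_property M" and "\<F> \<subseteq> M" using M(1) unfolding \<A>_def by auto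
  have "X \<in> M" if "\<And>\<G>. \<G> \<subseteq> M \<Longrightarrow> finite \<G> \<Longrightarrow> \<Inter>\<G> \<inter> X \<noteq> {}" for X
  proof -
    have "insert X M \<in> \<A>"
      using finite_intersection_property_insert[OF fip that] \<open>\<F> \<subseteq> M\<close> unfolding \<A>_def by auto
    then have "insert X M = M" using M(2) by blast
    then show ?thesis by blast
  qed
  with \<open>\<F> \<subseteq> M\<close> fip show ?thesis by (rule that)
qed

lemma ultrafilter_if_maximal_fip:
  assumes fip: "finite_intersection_property M"
    and maximal: "\<And>X. (\<And>\<G>. \<G> \<subseteq> M \<Longrightarrow> finite \<G> \<Longrightarrow> \<Inter>\<G> \<inter> X \<noteq> {}) \<Longrightarrow> X \<in> M"
  shows "is_ultrafilter_on M"
  unfolding is_ultrafilter_on_def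
proof (intro conjI allI impI)
  have ne: "\<Inter>\<G> \<noteq> {}" if "\<G> \<subseteq> M" "finite \<G>" for \<G>
    using fip that unfolding finite_intersection_property_def by blast
  show "{} \<notin> M" using ne[of "{{}}"] by auto
  show "UNIV \<in> M" by (rule maximal) (use ne in auto)
  show "A \<inter> B \<in> M" if AB: "A \<in> M \<and> B \<in> M" for A B
  proof (rule maximal)
    fix \<G> assume "\<G> \<subseteq> M" "finite \<G>"
    then show "\<Inter>\<G> \<inter> (A \<inter> B) \<noteq> {}" using ne[of "insert A (insert B \<G>)"] AB by auto
  qed
  show "B \<in> M" if AB: "A \<in> M \<and> A \<subseteq> B" for A B
  proof (rule maximal)
    fix \<G> assume "\<G> \<subseteq> M" "finite \<G>"
    then show "\<Inter>\<G> \<inter> B \<noteq> {}" using ne[of "insert A \<G>"] AB by auto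
  qed
  show "A \<in> M \<or> - A \<in> M" for A
  proof (rule ccontr)
    assume "\<not> (A \<in> M \<or> - A \<in> M)"
    then obtain \<G>1 \<G>2 where \<G>: "\<G>1 \<subseteq> M" "finite \<G>1" "\<Inter>\<G>1 \<inter> A = {}"
      "\<G>2 \<subseteq> M" "finite \<G>2" "\<Inter>\<G>2 \<inter> - A = {}"
      using maximal[of A] maximal[of "- A"] by blast
    then have "\<Inter>(\<G>1 \<union> \<G>2) = {}" by blast
    then show False using ne[of "\<G>1 \<union> \<G>2"] \<G> by blast
  qed
qed

lemma ultrafilter_extending_fip:
  assumes "finite_intersection_property \<F>"
  obtains U where "is_ultrafilter_on U" "\<F> \<subseteq> U"
  using maximal_fip_extension[OF assms] ultrafilter_if_maximal_fip by metis

context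
  fixes U :: "'a set set"
  assumes U: "is_ultrafilter_on U"
begin

lemma ultrafilter_UNIV: "UNIV \<in> U"
  and ultrafilter_empty: "{} \<notin> U"
  and ultrafilter_Int_iff: "A \<inter> B \<in> U \<longleftrightarrow> A \<in> U \<and> B \<in> U"
  and ultrafilter_mono: "A \<in> U \<Longrightarrow> A \<subseteq> B \<Longrightarrow> B \<in> U"
  using U unfolding is_ultrafilter_on_def by blast+

lemma ultrafilter_Compl_iff: "- A \<in> U \<longleftrightarrow> A \<notin> U"
proof
  assume "- A \<in> U"
  then show "A \<notin> U" using ultrafilter_Int_iff[of A "- A"] ultrafilter_empty by auto
next
  assume "A \<notin> U"
  then show "- A \<in> U" using U unfolding is_ultrafilter_on_def by blast
qed

lemma ultrafilter_Un_iff: "A \<union> B \<in> U \<longleftrightarrow> A \<in> U \<or> B \<in> U"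
proof
  assume AB: "A \<union> B \<in> U"
  show "A \<in> U \<or> B \<in> U"
  proof (rule ccontr)
    assume "\<not> (A \<in> U \<or> B \<in> U)"
    then have "(A \<union> B) \<inter> (- A \<inter> - B) \<in> U"
      using AB by (simp add: ultrafilter_Int_iff ultrafilter_Compl_iff)
    then show False using ultrafilter_empty by (simp add: Int_Un_distrib2)
  qed
qed (auto intro: ultrafilter_mono)

lemma ultrafilter_finite_UN:
  assumes "finite I" "(\<Union>i\<in>I. P i) \<in> U"
  shows "\<exists>i\<in>I. P i \<in> U"
  using assms
proof (induction I rule: finite_induct)
  case (insert j I)
  then show ?case by (simp add: ultrafilter_Un_iff) blast
qed (simp add: ultrafilter_empty)

end

definition ultrafilter_filter :: "'a set set \<Rightarrow> 'a filter" where
  "ultrafilter_filter U = Abs_filter (\<lambda>P. {x. P x} \<in> U)"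

context
  fixes U :: "'a set set"
  assumes U: "is_ultrafilter_on U"
begin

lemma eventually_ultrafilter_filter: "eventually P (ultrafilter_filter U) \<longleftrightarrow> {x. P x} \<in> U"
proof -
  have "is_filter (\<lambda>P. {x. P x} \<in> U)"
  proof
    show "{x. True} \<in> U" using ultrafilter_UNIV[OF U] by simp
  next
    fix P Q assume "{x. P x} \<in> U" "{x. Q x} \<in> U"
    then show "{x. P x \<and> Q x} \<in> U" using ultrafilter_Int_iff[OF U] by (simp add: Collect_conj_eq)
  next
    fix P Q assume "\<forall>x. P x \<longrightarrow> Q x" "{x. P x} \<in> U"
    then show "{x. Q x} \<in> U" by (auto intro: ultrafilter_mono[OF U])
  qed
  then show ?thesis unfolding ultrafilter_filter_def eventually_def by (simp add: Abs_filter_inverse)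
qed

lemma ultrafilter_filter_neq_bot: "ultrafilter_filter U \<noteq> bot"
  using eventually_ultrafilter_filter[of "\<lambda>_. False"] ultrafilter_empty[OF U] by auto

lemma ultrafilter_filter_tendsto_Lim:
  fixes f :: "'a \<Rightarrow> 'b::t2_space"
  assumes "compact K" "\<And>x. f x \<in> K"
  shows "(f \<longlongrightarrow> Lim (ultrafilter_filter U) f) (ultrafilter_filter U)"
proof -
  define G where "G = filtermap f (ultrafilter_filter U)"
  have "G \<noteq> bot" unfolding G_def by (simp add: filtermap_bot_iff ultrafilter_filter_neq_bot)
  moreover have "eventually (\<lambda>y. y \<in> K) G" unfolding G_def eventually_filtermap using assms(2) by simp
  ultimately obtain l where l: "inf (nhds l) G \<noteq> bot"
    using assms(1) unfolding compact_filter by blast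
  have "eventually (\<lambda>x. f x \<in> S) (ultrafilter_filter U)" if "open S" "l \<in> S" for S
  proof (rule ccontr)
    assume "\<not> eventually (\<lambda>x. f x \<in> S) (ultrafilter_filter U)"
    then have "eventually (\<lambda>y. y \<notin> S) G"
      using ultrafilter_Compl_iff[OF U] unfolding G_def eventually_filtermap eventually_ultrafilter_filter
      by (simp add: Collect_neg_eq)
    moreover have "eventually (\<lambda>y. y \<in> S) (nhds l)" using that by (rule eventually_nhds_in_open)
    ultimately have "eventually (\<lambda>_. False) (inf (nhds l) G)" unfolding eventually_inf by blast
    then show False using l by (simp add: eventually_False)
  qed
  then have "(f \<longlongrightarrow> l) (ultrafilter_filter U)" by (rule topological_tendstoI)
  then show ?thesis using ultrafilter_filter_neq_bot by (simp add: tendsto_Lim)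
qed

end

lemma free_ultrafilter_nat:
  obtains U :: "nat set set" where "is_ultrafilter_on U" "ultrafilter_filter U \<le> sequentially"
proof -
  have "finite_intersection_property {S :: nat set. finite (- S)}"
    unfolding finite_intersection_property_def
  proof (intro allI impI)
    fix \<G> :: "nat set set" assume "\<G> \<subseteq> {S. finite (- S)} \<and> finite \<G>"
    then have "finite (- \<Inter>\<G>)" by (auto simp: uminus_Inf)
    then show "\<Inter>\<G> \<noteq> {}" by auto
  qed
  then obtain U where U: "is_ultrafilter_on U" "{S :: nat set. finite (- S)} \<subseteq> U"
    by (rule ultrafilter_extending_fip)
  have "ultrafilter_filter U \<le> sequentially"
  proof (rule filter_leI)
    fix P assume "eventually P sequentially"
    then obtain N where "\<forall>n\<ge>N. P n" unfolding eventually_sequentially by blast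
    then have "- {n. P n} \<subseteq> {..<N}" by (auto simp: not_less)
    then have "{n. P n} \<in> U" using U(2) finite_subset by blast
    then show "eventually P (ultrafilter_filter U)" by (simp add: eventually_ultrafilter_filter[OF U(1)])
  qed
  then show ?thesis using that U(1) by blast
qed

section \<open>Hall's marriage theorem\<close>

lemma Hall_condition_Diff_tight:
  fixes N :: "'i \<Rightarrow> 'b set"
  assumes fin: "finite I" and hall: "\<forall>T\<subseteq>I. card T \<le> card (\<Union>(N ` T))"
    and S: "S \<subseteq> I" "card (\<Union>(N ` S)) = card S"
  shows "\<forall>T\<subseteq>I - S. card T \<le> card (\<Union>i\<in>T. N i - \<Union>(N ` S))"
proof (intro allI impI)
  fix T assume T: "T \<subseteq> I - S"
  define X where "X = \<Union>(N ` S)"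
  have finT: "finite T" and finS: "finite S" using T S(1) fin finite_subset by blast+
  have "card T + card S = card (T \<union> S)" using T finT finS by (subst card_Un_disjoint) auto
  also have "\<dots> \<le> card (\<Union>(N ` (T \<union> S)))" using hall T S(1) by (metis Diff_subset le_sup_iff subset_trans)
  also have "\<Union>(N ` (T \<union> S)) = (\<Union>i\<in>T. N i - X) \<union> X" unfolding X_def by blast
  also have "card \<dots> \<le> card (\<Union>i\<in>T. N i - X) + card X" by (rule card_Un_le)
  finally show "card T \<le> card (\<Union>i\<in>T. N i - \<Union>(N ` S))" using S(2) unfolding X_def by linarith
qed

lemma Hall_condition_remove_slack:
  fixes N :: "'i \<Rightarrow> 'b set"
  assumes hall: "\<forall>S\<subseteq>I. card S \<le> card (\<Union>(N ` S))"
    and no_tight: "\<forall>S\<subseteq>I. S \<noteq> {} \<longrightarrow> S \<noteq> I \<longrightarrow> card (\<Union>(N ` S)) \<noteq> card S"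
    and "i0 \<in> I"
  shows "\<forall>T\<subseteq>I - {i0}. card T \<le> card (\<Union>i\<in>T. N i - {b})"
proof (intro allI impI)
  fix T assume T: "T \<subseteq> I - {i0}"
  show "card T \<le> card (\<Union>i\<in>T. N i - {b})"
  proof (cases "T = {}")
    case False
    have "card T \<le> card (\<Union>(N ` T))" using hall T by blast
    moreover have "card (\<Union>(N ` T)) \<noteq> card T" using no_tight T False \<open>i0 \<in> I\<close> by blast
    moreover have "(\<Union>i\<in>T. N i - {b}) = \<Union>(N ` T) - {b}" by blast
    then have "card (\<Union>(N ` T)) - 1 \<le> card (\<Union>i\<in>T. N i - {b})"
      using diff_card_le_card_Diff[of "{b}" "\<Union>(N ` T)"] by simp
    ultimately show ?thesis by linarith
  qed simp
qed

lemma representatives_glue: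
  assumes "S \<subseteq> I"
    and "inj_on \<phi>1 S" "\<forall>i\<in>S. \<phi>1 i \<in> N i"
    and "inj_on \<phi>2 (I - S)" "\<forall>i\<in>I - S. \<phi>2 i \<in> N i - \<Union>(N ` S)"
  shows "\<exists>\<phi>. inj_on \<phi> I \<and> (\<forall>i\<in>I. \<phi> i \<in> N i)"
proof -
  define \<phi> where "\<phi> i = (if i \<in> S then \<phi>1 i else \<phi>2 i)" for i
  have "\<phi>1 ` S \<inter> \<phi>2 ` (I - S) = {}" using assms(3,5) by fastforce
  then have "inj_on \<phi> (S \<union> (I - S))"
    unfolding \<phi>_def by (rule inj_on_disjoint_Un[OF assms(2,4)])
  moreover have "S \<union> (I - S) = I" using assms(1) by blast
  moreover have "\<forall>i\<in>I. \<phi> i \<in> N i" using assms(3,5) unfolding \<phi>_def by simp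
  ultimately show ?thesis by auto
qed

lemma representatives_insert:
  assumes "i0 \<in> I" "b \<in> N i0" "inj_on \<phi> (I - {i0})" "\<forall>i\<in>I - {i0}. \<phi> i \<in> N i - {b}"
  shows "\<exists>\<phi>. inj_on \<phi> I \<and> (\<forall>i\<in>I. \<phi> i \<in> N i)"
proof -
  have "b \<notin> \<phi> ` (I - {i0})" using assms(4) by blast
  then have "inj_on (\<phi>(i0 := b)) (insert i0 (I - {i0}))"
    by (subst inj_on_insert) (simp add: inj_on_fun_updI[OF assms(3)])
  moreover have "insert i0 (I - {i0}) = I" using assms(1) by blast
  moreover have "\<forall>i\<in>I. (\<phi>(i0 := b)) i \<in> N i" using assms(2,4) by simp
  ultimately show ?thesis by auto
qed

lemma Hall_marriage_finite:
  fixes N :: "'i \<Rightarrow> 'b set"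
  assumes "finite I" "\<forall>i\<in>I. finite (N i)" "\<forall>S\<subseteq>I. card S \<le> card (\<Union>(N ` S))"
  shows "\<exists>\<phi>. inj_on \<phi> I \<and> (\<forall>i\<in>I. \<phi> i \<in> N i)"
  using assms
proof (induction "card I" arbitrary: I N rule: less_induct)
  case less
  note fin = less.prems(1) and finN = less.prems(2) and hall = less.prems(3)
  have IH: "\<exists>\<phi>. inj_on \<phi> J \<and> (\<forall>i\<in>J. \<phi> i \<in> N' i)"
    if "J \<subseteq> I" "J \<noteq> I" "\<forall>i\<in>J. finite (N' i)" "\<forall>S\<subseteq>J. card S \<le> card (\<Union>(N' ` S))"
    for J and N' :: "'i \<Rightarrow> 'b set"
  proof (rule less.hyps)
    show "card J < card I" using that(1,2) fin by (simp add: psubset_card_mono)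
    show "finite J" using that(1) fin by (rule finite_subset)
  qed (use that in auto)
  show ?case
  proof (cases "\<exists>S. S \<subseteq> I \<and> S \<noteq> {} \<and> S \<noteq> I \<and> card (\<Union>(N ` S)) = card S")
    case True
    then obtain S where S: "S \<subseteq> I" "S \<noteq> {}" "S \<noteq> I" "card (\<Union>(N ` S)) = card S" by blast
    obtain \<phi>1 where "inj_on \<phi>1 S" "\<forall>i\<in>S. \<phi>1 i \<in> N i"
      using IH[of S N] S(1,3) finN hall by auto
    moreover have "I - S \<noteq> I" using S(1,2) by blast
    then obtain \<phi>2 where "inj_on \<phi>2 (I - S)" "\<forall>i\<in>I - S. \<phi>2 i \<in> N i - \<Union>(N ` S)"
      using IH[of "I - S" "\<lambda>i. N i - \<Union>(N ` S)"] Hall_condition_Diff_tight[OF fin hall S(1,4)] finN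
      by auto
    ultimately show ?thesis by (rule representatives_glue[OF S(1)])
  next
    case False
    then have no_tight: "\<forall>S\<subseteq>I. S \<noteq> {} \<longrightarrow> S \<noteq> I \<longrightarrow> card (\<Union>(N ` S)) \<noteq> card S"
      by blast
    show ?thesis
    proof (cases "I = {}")
      case False
      then obtain i0 where "i0 \<in> I" by blast
      have "card {i0} \<le> card (\<Union>(N ` {i0}))" using \<open>i0 \<in> I\<close> by (intro hall[rule_format]) simp
      then have "N i0 \<noteq> {}" by auto
      then obtain b where "b \<in> N i0" by blast
      have "I - {i0} \<subseteq> I" "I - {i0} \<noteq> I" "\<forall>i\<in>I - {i0}. finite (N i - {b})"
        using \<open>i0 \<in> I\<close> finN by auto
      then obtain \<phi> where "inj_on \<phi> (I - {i0})" "\<forall>i\<in>I - {i0}. \<phi> i \<in> N i - {b}"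
        using IH[of "I - {i0}" "\<lambda>i. N i - {b}"] Hall_condition_remove_slack[OF hall no_tight \<open>i0 \<in> I\<close>] by blast
      then show ?thesis using representatives_insert[of i0 I b N] \<open>i0 \<in> I\<close> \<open>b \<in> N i0\<close> by blast
    qed simp
  qed
qed

text \<open>The infinite case follows by compactness: a matching of each finite subfamily is
  chosen, and \<open>\<phi> i\<close> is the value that these matchings take at \<open>i\<close> on an ultrafilter-large
  collection of finite subfamilies.\<close>

theorem Hall_marriage:
  fixes N :: "'i \<Rightarrow> 'b set"
  assumes finN: "\<forall>i\<in>I. finite (N i)"
    and hall: "\<forall>S\<subseteq>I. finite S \<longrightarrow> card S \<le> card (\<Union>(N ` S))"
  shows "\<exists>\<phi>. inj_on \<phi> I \<and> (\<forall>i\<in>I. \<phi> i \<in> N i)"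
proof -
  have "\<exists>\<psi>. inj_on \<psi> S \<and> (\<forall>i\<in>S. \<psi> i \<in> N i)" if "finite S" "S \<subseteq> I" for S
  proof (rule Hall_marriage_finite)
    show "\<forall>T\<subseteq>S. card T \<le> card (\<Union>(N ` T))"
      using hall that by (meson finite_subset order_trans)
  qed (use that finN in auto)
  then obtain \<psi> where \<psi>: "\<And>S. finite S \<Longrightarrow> S \<subseteq> I \<Longrightarrow> inj_on (\<psi> S) S \<and> (\<forall>i\<in>S. \<psi> S i \<in> N i)"
    by metis
  define D where "D i = {S. finite S \<and> S \<subseteq> I \<and> i \<in> S}" for i
  have "finite_intersection_property (D ` I)"
    unfolding finite_intersection_property_def
  proof (intro allI impI)
    fix \<G> assume "\<G> \<subseteq> D ` I \<and> finite \<G>"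
    then obtain F where "F \<subseteq> I" "finite F" "\<G> = D ` F" by (meson finite_subset_image)
    then have "F \<in> \<Inter>\<G>" unfolding D_def by blast
    then show "\<Inter>\<G> \<noteq> {}" by blast
  qed
  then obtain U where U: "is_ultrafilter_on U" "D ` I \<subseteq> U" by (rule ultrafilter_extending_fip)
  define V where "V i b = {S \<in> D i. \<psi> S i = b}" for i b
  have "\<exists>b\<in>N i. V i b \<in> U" if "i \<in> I" for i
  proof (rule ultrafilter_finite_UN[OF U(1)])
    show "finite (N i)" using finN that by blast
    have "D i = (\<Union>b\<in>N i. V i b)" using \<psi> unfolding D_def V_def by blast
    then show "(\<Union>b\<in>N i. V i b) \<in> U" using U(2) that by auto
  qed
  then obtain \<phi> where \<phi>: "\<And>i. i \<in> I \<Longrightarrow> \<phi> i \<in> N i \<and> V i (\<phi> i) \<in> U" by metis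
  have "inj_on \<phi> I"
  proof (rule inj_onI)
    fix i j assume ij: "i \<in> I" "j \<in> I" "\<phi> i = \<phi> j"
    then have "V i (\<phi> i) \<inter> V j (\<phi> j) \<noteq> {}"
      using \<phi> ultrafilter_Int_iff[OF U(1)] ultrafilter_empty[OF U(1)] by metis
    then obtain S where S: "finite S" "S \<subseteq> I" "i \<in> S" "j \<in> S" "\<psi> S i = \<phi> i" "\<psi> S j = \<phi> j"
      unfolding V_def D_def by blast
    then show "i = j" using \<psi>[OF S(1,2)] ij(3) by (metis inj_onD)
  qed
  then show ?thesis using \<phi> by blast
qed

section \<open>Invariant means and Folner sets\<close>

context
  fixes \<nu> :: "'g::group_add set \<Rightarrow> real"
  assumes \<nu>: "fa_inv_prob \<nu>"
begin

lemma mean_Un_disjoint: "A \<inter> B = {} \<Longrightarrow> \<nu> (A \<union> B) = \<nu> A + \<nu> B"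
  and mean_nonneg: "0 \<le> \<nu> A"
  and mean_UNIV: "\<nu> UNIV = 1"
  and mean_translate: "\<nu> ((+) g ` A) = \<nu> A"
  using \<nu> unfolding fa_inv_prob_def by auto

lemma mean_empty: "\<nu> {} = 0"
  using mean_Un_disjoint[of "{}" "{}"] by simp

lemma mean_mono:
  assumes "A \<subseteq> B"
  shows "\<nu> A \<le> \<nu> B"
proof -
  have "\<nu> B = \<nu> A + \<nu> (B - A)"
    using mean_Un_disjoint[of A "B - A"] assms by (simp add: Un_absorb1)
  then show ?thesis using mean_nonneg[of "B - A"] by simp
qed

lemma mean_le_1: "\<nu> A \<le> 1"
  using mean_mono[of A UNIV] mean_UNIV by simp

lemma mean_Un_le: "\<nu> (A \<union> B) \<le> \<nu> A + \<nu> B"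
  using mean_Un_disjoint[of A "B - A"] mean_mono[of "B - A" B] by simp

lemma mean_UN_disjoint:
  assumes "finite I" "disjoint_family_on P I"
  shows "\<nu> (\<Union>i\<in>I. P i) = (\<Sum>i\<in>I. \<nu> (P i))"
  using assms
proof (induction I rule: finite_induct)
  case (insert j I)
  then have "P j \<inter> (\<Union>i\<in>I. P i) = {}" by (auto simp: disjoint_family_on_def)
  moreover have "disjoint_family_on P I" using insert.prems by (rule disjoint_family_on_mono[rotated]) auto
  ultimately show ?case using insert by (simp add: mean_Un_disjoint)
qed (simp add: mean_empty)

lemma mean_UN_le:
  assumes "finite I"
  shows "\<nu> (\<Union>i\<in>I. P i) \<le> (\<Sum>i\<in>I. \<nu> (P i))"
  using assms
proof (induction I rule: finite_induct)
  case (insert j I)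
  then show ?case using mean_Un_le[of "P j" "\<Union>i\<in>I. P i"] by simp
qed (simp add: mean_empty)

end

lemma set_plus_singleton_eq_image: "F + {x} = (\<lambda>s. s + x) ` F"
  by (auto simp: set_plus_def)

lemma card_set_plus_singleton: "card (F + {x}) = card (F :: 'g::group_add set)"
  unfolding set_plus_singleton_eq_image by (rule card_image) (simp add: inj_on_def)

lemma zero_set_plus: "{0} + F = (F :: 'g::monoid_add set)"
  by (auto simp: set_plus_def)

lemma finite_funpow_set_plus: "finite K \<Longrightarrow> finite F \<Longrightarrow> finite (((+) K ^^ m) F)"
  by (induction m) (simp_all add: finite_set_plus)

lemma funpow_set_plus_eq: "((+) K ^^ m) F = ((+) K ^^ m) {0} + (F :: 'g::monoid_add set)"
  by (induction m) (simp_all add: zero_set_plus add.assoc)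

lemma funpow_set_plus_growth:
  fixes K :: "'g::group_add set" and c :: real
  assumes growth: "\<And>F. finite F \<Longrightarrow> F \<noteq> {} \<Longrightarrow> c * card F \<le> card (K + F)"
    and K: "finite K" "0 \<in> K" and "0 \<le> c" and F: "finite F" "F \<noteq> {}"
  shows "c ^ m * card F \<le> card (((+) K ^^ m) F)"
proof (induction m)
  case (Suc m)
  define G where "G = ((+) K ^^ m) F"
  have "F \<subseteq> G" unfolding G_def
    by (induction m) (use K(2) in \<open>auto intro: set_plus_intro[of 0 K, simplified]\<close>)
  then have "finite G" "G \<noteq> {}" using finite_funpow_set_plus[OF K(1) F(1)] F(2) unfolding G_def by auto
  have "c ^ Suc m * card F = c * (c ^ m * card F)" by simp
  also have "\<dots> \<le> c * card G" using Suc \<open>0 \<le> c\<close> unfolding G_def by (rule mult_left_mono)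
  also have "\<dots> \<le> card (K + G)" using growth[OF \<open>finite G\<close> \<open>G \<noteq> {}\<close>] .
  finally show ?case unfolding G_def by simp
qed simp

lemma injection_of_doubling:
  fixes L :: "'g::group_add set"
  assumes L: "finite L" and doubling: "\<And>F. finite F \<Longrightarrow> 2 * card F \<le> card (L + F)"
  obtains \<phi> :: "'g \<times> bool \<Rightarrow> 'g" where "inj \<phi>" "\<And>x b. \<phi> (x, b) - x \<in> L"
proof -
  define N where "N p = L + {fst p}" for p :: "'g \<times> bool"
  have "\<exists>\<phi>. inj_on \<phi> UNIV \<and> (\<forall>p\<in>UNIV. \<phi> p \<in> N p)"
  proof (rule Hall_marriage)
    show "\<forall>p\<in>UNIV. finite (N p)" unfolding N_def using L by (simp add: finite_set_plus)
    show "\<forall>S\<subseteq>UNIV. finite S \<longrightarrow> card S \<le> card (\<Union>(N ` S))"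
    proof (intro allI impI)
      fix S :: "('g \<times> bool) set" assume "finite S"
      have "S \<subseteq> fst ` S \<times> UNIV" by force
      then have "card S \<le> card (fst ` S \<times> (UNIV :: bool set))"
        using \<open>finite S\<close> by (intro card_mono) auto
      also have "\<dots> = 2 * card (fst ` S)" by (simp add: card_cartesian_product)
      also have "\<dots> \<le> card (L + fst ` S)" using doubling \<open>finite S\<close> by simp
      also have "L + fst ` S = \<Union>(N ` S)" unfolding N_def set_plus_def by auto
      finally show "card S \<le> card (\<Union>(N ` S))" .
    qed
  qed
  then obtain \<phi> where "inj \<phi>" "\<And>p. \<phi> p \<in> N p" by blast
  moreover have "\<phi> (x, b) - x \<in> L" if "\<phi> (x, b) \<in> N (x, b)" for x b
    using that unfolding N_def set_plus_def by (auto simp: algebra_simps)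
  ultimately show ?thesis using that by blast
qed

text \<open>The sets \<open>Q l b\<close> below, translated by \<open>l\<close>, are pairwise disjoint, while for each \<open>b\<close> they
  partition the group: an invariant mean would give the group mass 2.\<close>

lemma bounded_injection_excludes_invariant_mean:
  fixes \<phi> :: "'g::group_add \<times> bool \<Rightarrow> 'g" and \<nu> :: "'g set \<Rightarrow> real"
  assumes L: "finite L" and \<phi>: "inj \<phi>" "\<And>x b. \<phi> (x, b) - x \<in> L"
  shows "\<not> fa_inv_prob \<nu>"
proof
  assume \<nu>: "fa_inv_prob \<nu>"
  define Q where "Q l b = {x. \<phi> (x, b) - x = l}" for l b
  have \<phi>_eq: "l + x = \<phi> (x, b)" if "x \<in> Q l b" for l x b
    using that unfolding Q_def by (simp add: algebra_simps)
  have Q_sum: "(\<Sum>l\<in>L. \<nu> (Q l b)) = 1" for b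
  proof -
    have "disjoint_family_on (\<lambda>l. Q l b) L" unfolding disjoint_family_on_def Q_def by auto
    moreover have "(\<Union>l\<in>L. Q l b) = UNIV" using \<phi>(2) unfolding Q_def by blast
    ultimately show ?thesis using mean_UN_disjoint[OF \<nu> L, of "\<lambda>l. Q l b"] mean_UNIV[OF \<nu>] by simp
  qed
  define T where "T p = (+) (fst p) ` Q (fst p) (snd p)" for p
  have "disjoint_family_on T (L \<times> (UNIV :: bool set))"
    unfolding disjoint_family_on_def
  proof (intro ballI impI)
    fix p q :: "'g \<times> bool" assume "p \<noteq> q"
    show "T p \<inter> T q = {}"
    proof (rule ccontr)
      assume "T p \<inter> T q \<noteq> {}"
      then obtain x y where xy: "x \<in> Q (fst p) (snd p)" "y \<in> Q (fst q) (snd q)" "fst p + x = fst q + y"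
        unfolding T_def by blast
      then have "\<phi> (x, snd p) = \<phi> (y, snd q)" using \<phi>_eq by metis
      then have "x = y" "snd p = snd q" using \<phi>(1) by (auto dest: injD)
      then show False using xy(3) \<open>p \<noteq> q\<close> by (simp add: prod_eq_iff)
    qed
  qed
  then have "\<nu> (\<Union>p\<in>L \<times> UNIV. T p) = (\<Sum>p\<in>L \<times> UNIV. \<nu> (T p))"
    using L by (simp add: mean_UN_disjoint[OF \<nu>])
  also have "\<dots> = (\<Sum>p\<in>L \<times> UNIV. \<nu> (Q (fst p) (snd p)))"
    unfolding T_def by (simp add: mean_translate[OF \<nu>])
  also have "\<dots> = (\<Sum>l\<in>L. \<Sum>b\<in>UNIV. \<nu> (Q l b))" by (simp add: sum.cartesian_product split_def)
  also have "\<dots> = (\<Sum>b\<in>UNIV. \<Sum>l\<in>L. \<nu> (Q l b))" by (rule sum.swap)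
  also have "\<dots> = 2" by (simp add: UNIV_bool Q_sum)
  finally show False using mean_le_1[OF \<nu>, of "\<Union>p\<in>L \<times> UNIV. T p"] by simp
qed

lemma exists_folner_set:
  fixes K :: "'g::group_add set" and \<epsilon> :: real
  assumes "amenable TYPE('g)" and K: "finite K" and "0 < \<epsilon>"
  shows "\<exists>F. finite F \<and> F \<noteq> {} \<and> card (K + F) \<le> (1 + \<epsilon>) * card F"
proof (rule ccontr)
  assume contra: "\<not> ?thesis"
  define K0 where "K0 = insert 0 K"
  have K0: "finite K0" "0 \<in> K0" using K unfolding K0_def by auto
  have growth: "(1 + \<epsilon>) * card F \<le> card (K0 + F)" if "finite F" "F \<noteq> {}" for F
  proof -
    have "K + F \<subseteq> K0 + F" unfolding K0_def by (rule set_plus_mono2) auto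
    then have "card (K + F) \<le> card (K0 + F)" using that K0 by (intro card_mono) (auto simp: finite_set_plus)
    moreover have "(1 + \<epsilon>) * card F < card (K + F)" using contra that by (meson not_le)
    ultimately show ?thesis by linarith
  qed
  obtain m where m: "2 < (1 + \<epsilon>) ^ m" using real_arch_pow[of "1 + \<epsilon>" 2] \<open>0 < \<epsilon>\<close> by auto
  define L where "L = ((+) K0 ^^ m) {0}"
  have "finite L" unfolding L_def using K0(1) by (simp add: finite_funpow_set_plus)
  have "2 * card F \<le> card (L + F)" if "finite F" for F
  proof (cases "F = {}")
    case False
    have "2 * real (card F) \<le> (1 + \<epsilon>) ^ m * card F" using m by (intro mult_right_mono) auto
    also have "\<dots> \<le> card (L + F)"
      using funpow_set_plus_growth[OF growth K0] \<open>0 < \<epsilon>\<close> that False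
      unfolding L_def funpow_set_plus_eq[where K=K0 and m=m and F=F, symmetric] by simp
    finally have "real (2 * card F) \<le> real (card (L + F))" by simp
    then show ?thesis by (simp only: of_nat_le_iff)
  qed simp
  then obtain \<phi> :: "'g \<times> bool \<Rightarrow> 'g" where "inj \<phi>" "\<And>x b. \<phi> (x, b) - x \<in> L"
    using injection_of_doubling[OF \<open>finite L\<close>] by blast
  then have "\<not> fa_inv_prob \<nu>" for \<nu> :: "'g set \<Rightarrow> real"
    using bounded_injection_excludes_invariant_mean[OF \<open>finite L\<close>] by blast
  then show False using assms(1) unfolding amenable_def by blast
qed

lemma card_translate_Diff_le:
  fixes K F :: "'g::group_add set"
  assumes "finite K" "finite F" "0 \<in> K" "g \<in> K"
  shows "card ((+) g ` F - F) + card F \<le> card (K + F)"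
proof -
  have "F \<subseteq> K + F" using \<open>0 \<in> K\<close> set_plus_intro[of 0 K] by fastforce
  moreover have "(+) g ` F \<subseteq> K + F" using \<open>g \<in> K\<close> by auto
  ultimately have "((+) g ` F - F) \<union> F \<subseteq> K + F" by blast
  then have "card (((+) g ` F - F) \<union> F) \<le> card (K + F)"
    using assms by (intro card_mono) (auto simp: finite_set_plus)
  moreover have "card (((+) g ` F - F) \<union> F) = card ((+) g ` F - F) + card F"
    using \<open>finite F\<close> by (intro card_Un_disjoint) auto
  ultimately show ?thesis by linarith
qed

lemma exists_folner_sequence:
  assumes "countable (UNIV :: 'g::group_add set)" "amenable TYPE('g)"
  obtains F :: "nat \<Rightarrow> 'g::group_add set" where "\<And>n. finite (F n)" "\<And>n. F n \<noteq> {}"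
    "\<And>g. (\<lambda>n. card ((+) g ` F n - F n) / card (F n)) \<longlonglongrightarrow> 0"
proof -
  define e where "e = from_nat_into (UNIV :: 'g set)"
  define K where "K n = insert 0 (e ` {..n})" for n
  have K: "finite (K n)" "0 \<in> K n" for n unfolding K_def by auto
  have "\<forall>n. \<exists>F. finite F \<and> F \<noteq> {} \<and> card (K n + F) \<le> (1 + inverse (Suc n)) * card F"
    using exists_folner_set[OF assms(2) K(1)] by simp
  then obtain F where F: "\<And>n. finite (F n)" "\<And>n. F n \<noteq> {}"
    "\<And>n. card (K n + F n) \<le> (1 + inverse (Suc n)) * card (F n)"
    by metis
  have "(\<lambda>n. card ((+) g ` F n - F n) / card (F n)) \<longlonglongrightarrow> 0" for g
  proof (rule tendsto_sandwich[OF _ _ tendsto_const LIMSEQ_inverse_real_of_nat])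
    obtain m where "e m = g" using from_nat_into_surj[OF assms(1)] unfolding e_def by blast
    have "card ((+) g ` F n - F n) / card (F n) \<le> inverse (Suc n)" if "m \<le> n" for n
    proof -
      have "g \<in> K n" using \<open>e m = g\<close> that unfolding K_def by auto
      then have "real (card ((+) g ` F n - F n)) + card (F n) \<le> card (K n + F n)"
        using card_translate_Diff_le[OF K(1) F(1) K(2)] by (metis of_nat_add of_nat_mono)
      then have "real (card ((+) g ` F n - F n)) \<le> inverse (Suc n) * card (F n)"
        using F(3)[of n] by (simp add: algebra_simps)
      then show ?thesis using F(1,2) by (simp add: divide_le_eq card_gt_0_iff)
    qed
    then show "\<forall>\<^sub>F n in sequentially. card ((+) g ` F n - F n) / card (F n) \<le> inverse (Suc n)"
      using eventually_sequentially by blast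
  qed simp
  then show ?thesis using that F(1,2) by blast
qed

section \<open>Comparison in the group\<close>

lemma card_Int_translate_window:
  fixes E F :: "'g::group_add set"
  shows "card ((+) g ` E \<inter> (F + {x})) = card (E \<inter> ((+) (- g) ` F + {x}))"
proof -
  have inj: "inj ((+) g)" by (simp add: inj_on_def)
  have "(+) g ` ((+) (- g) ` F + {x}) = F + {x}"
    unfolding set_plus_singleton_eq_image image_image by (simp add: add.assoc)
  then have "(+) g ` E \<inter> (F + {x}) = (+) g ` (E \<inter> ((+) (- g) ` F + {x}))"
    by (simp add: image_Int[OF inj])
  then show ?thesis by (simp add: card_image)
qed

lemma card_Diff_eq_card_Diff:
  assumes "finite F" "finite F'" "card F' = card F"
  shows "card (F - F') = card (F' - F)"
  using assms by (simp add: card_Diff_subset_Int Int_commute)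

lemma card_Int_window_diff_le:
  fixes E F F' :: "'g::group_add set"
  assumes "finite F" "finite F'" "card F' = card F"
  shows "\<bar>real (card (E \<inter> (F' + {x}))) - card (E \<inter> (F + {x}))\<bar> \<le> card (F' - F)"
proof -
  have le: "card (E \<inter> (G' + {x})) \<le> card (E \<inter> (G + {x})) + card (G' - G)"
    if "finite G" "finite G'" for G G' :: "'g set"
  proof -
    have "E \<inter> (G' + {x}) \<subseteq> (E \<inter> (G + {x})) \<union> ((G' - G) + {x})" by (auto simp: set_plus_def)
    then have "card (E \<inter> (G' + {x})) \<le> card ((E \<inter> (G + {x})) \<union> ((G' - G) + {x}))"
      using that by (intro card_mono) (auto simp: finite_set_plus)
    also have "\<dots> \<le> card (E \<inter> (G + {x})) + card ((G' - G) + {x})" by (rule card_Un_le)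
    finally show ?thesis by (simp add: card_set_plus_singleton)
  qed
  show ?thesis
    using le[of F F'] le[of F' F] card_Diff_eq_card_Diff[OF assms] assms(1,2) by linarith
qed

lemma card_Int_translate_window_diff_le:
  fixes E F :: "'g::group_add set"
  assumes "finite F"
  shows "\<bar>real (card ((+) g ` E \<inter> (F + {x}))) - card (E \<inter> (F + {x}))\<bar> \<le> card ((+) (- g) ` F - F)"
  unfolding card_Int_translate_window
  using assms by (intro card_Int_window_diff_le) (auto simp: card_image)

lemma fa_inv_prob_ultralimit:
  fixes d :: "'i \<Rightarrow> 'g::group_add set \<Rightarrow> real"
  assumes U: "is_ultrafilter_on U"
    and range: "\<And>i E. d i E \<in> {0..1}" and total: "\<And>i. d i UNIV = 1"
    and additive: "\<And>i A B. A \<inter> B = {} \<Longrightarrow> d i (A \<union> B) = d i A + d i B"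
    and asymp_invariant: "\<And>g E. ((\<lambda>i. d i ((+) g ` E) - d i E) \<longlongrightarrow> 0) (ultrafilter_filter U)"
  shows "fa_inv_prob (\<lambda>E. Lim (ultrafilter_filter U) (\<lambda>i. d i E))"
  unfolding fa_inv_prob_def
proof (intro conjI allI impI)
  let ?F = "ultrafilter_filter U"
  define \<nu> where "\<nu> E = Lim ?F (\<lambda>i. d i E)" for E
  have nontrivial: "?F \<noteq> bot" by (rule ultrafilter_filter_neq_bot[OF U])
  have lim: "((\<lambda>i. d i E) \<longlongrightarrow> \<nu> E) ?F" for E
    unfolding \<nu>_def using range by (intro ultrafilter_filter_tendsto_Lim[OF U compact_Icc])
  have unique: "\<nu> E = l" if "((\<lambda>i. d i E) \<longlongrightarrow> l) ?F" for E l
    using tendsto_unique[OF nontrivial lim that] .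
  show "\<nu> UNIV = 1" using unique[of UNIV 1] by (simp add: total)
  show "0 \<le> \<nu> E" for E
    using tendsto_lowerbound[OF lim _ nontrivial] range by (simp add: always_eventually)
  show "\<nu> (A \<union> B) = \<nu> A + \<nu> B" if "A \<inter> B = {}" for A B
    using unique tendsto_add[OF lim lim] by (simp add: additive[OF that])
  show "\<nu> ((\<lambda>x. g + x) ` E) = \<nu> E" for g E
    using tendsto_unique[OF nontrivial tendsto_diff[OF lim lim] asymp_invariant[of g E]] by simp
qed

lemma window_density_range:
  fixes F :: "'g::group_add set"
  assumes "finite F" "F \<noteq> {}"
  shows "card (E \<inter> (F + {x})) / card F \<in> {0..1}"
proof -
  have "card (E \<inter> (F + {x})) \<le> card (F + {x})"
    using assms by (intro card_mono) (auto simp: finite_set_plus)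
  then show ?thesis using assms by (simp add: card_set_plus_singleton card_gt_0_iff)
qed

lemma folner_window_density_ultralimit:
  fixes F :: "nat \<Rightarrow> 'g::group_add set" and x :: "nat \<Rightarrow> 'g"
  assumes F: "\<And>n. finite (F n)" "\<And>n. F n \<noteq> {}"
    and folner: "\<And>g. (\<lambda>n. card ((+) g ` F n - F n) / card (F n)) \<longlonglongrightarrow> 0"
    and U: "is_ultrafilter_on U" "ultrafilter_filter U \<le> sequentially"
  shows "fa_inv_prob (\<lambda>E. Lim (ultrafilter_filter U) (\<lambda>n. card (E \<inter> (F n + {x n})) / card (F n)))"
proof (rule fa_inv_prob_ultralimit[OF U(1)])
  have F_pos: "0 < real (card (F n))" for n using F by (simp add: card_gt_0_iff)
  show "card (E \<inter> (F n + {x n})) / card (F n) \<in> {0..1}" for n E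
    using window_density_range[OF F] .
  show "card (UNIV \<inter> (F n + {x n})) / card (F n) = 1" for n
    using F_pos[of n] by (simp add: card_set_plus_singleton)
  show "card ((A \<union> B) \<inter> (F n + {x n})) / card (F n)
      = card (A \<inter> (F n + {x n})) / card (F n) + card (B \<inter> (F n + {x n})) / card (F n)"
    if "A \<inter> B = {}" for n A B
  proof -
    have "card ((A \<union> B) \<inter> (F n + {x n})) = card (A \<inter> (F n + {x n})) + card (B \<inter> (F n + {x n}))"
      using that F(1) by (subst card_Un_disjoint[symmetric]) (auto simp: finite_set_plus Int_Un_distrib2)
    then show ?thesis by (simp add: add_divide_distrib)
  qed
  show "((\<lambda>n. card ((+) g ` E \<inter> (F n + {x n})) / card (F n) - card (E \<inter> (F n + {x n})) / card (F n))
      \<longlongrightarrow> 0) (ultrafilter_filter U)" for g E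
  proof (rule tendsto_mono[OF U(2)], rule Lim_null_comparison[OF _ folner[of "- g"]])
    show "\<forall>\<^sub>F n in sequentially.
        norm (card ((+) g ` E \<inter> (F n + {x n})) / card (F n) - card (E \<inter> (F n + {x n})) / card (F n))
        \<le> card ((+) (- g) ` F n - F n) / card (F n)"
      using card_Int_translate_window_diff_le[OF F(1)] F_pos
      by (intro always_eventually allI) (simp add: diff_divide_distrib[symmetric] divide_right_mono)
  qed
qed

text \<open>If no finite window \<open>F\<close> sees fewer points of \<open>A\<close> than of \<open>B\<close> in each of its translates, then the
  proportions of \<open>A\<close> and \<open>B\<close> in badly placed translates of Folner sets converge, along an
  ultrafilter, to an invariant mean giving \<open>B\<close> at most the mass of \<open>A\<close>.\<close>

lemma uniform_window_comparison:
  fixes A B :: "'g::group_add set"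
  assumes "countable (UNIV :: 'g set)" "amenable TYPE('g)"
    and less: "\<forall>\<nu>. fa_inv_prob \<nu> \<longrightarrow> \<nu> A < \<nu> B"
  shows "\<exists>F. finite F \<and> F \<noteq> {} \<and> (\<forall>x. card (A \<inter> (F + {x})) < card (B \<inter> (F + {x})))"
proof (rule ccontr)
  assume contra: "\<not> ?thesis"
  obtain F :: "nat \<Rightarrow> 'g set" where F: "\<And>n. finite (F n)" "\<And>n. F n \<noteq> {}"
    and folner: "\<And>g. (\<lambda>n. card ((+) g ` F n - F n) / card (F n)) \<longlonglongrightarrow> 0"
    using exists_folner_sequence[OF assms(1,2)] by blast
  have "\<forall>n. \<exists>x. card (B \<inter> (F n + {x})) \<le> card (A \<inter> (F n + {x}))"
    using contra F by (meson not_less)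
  then obtain x where x: "\<And>n. card (B \<inter> (F n + {x n})) \<le> card (A \<inter> (F n + {x n}))" by metis
  obtain U :: "nat set set" where U: "is_ultrafilter_on U" "ultrafilter_filter U \<le> sequentially"
    by (rule free_ultrafilter_nat)
  define d where "d n E = card (E \<inter> (F n + {x n})) / card (F n)" for n E
  define \<nu> where "\<nu> E = Lim (ultrafilter_filter U) (\<lambda>n. d n E)" for E
  have "fa_inv_prob \<nu>"
    unfolding \<nu>_def d_def by (rule folner_window_density_ultralimit[OF F folner U])
  have lim: "((\<lambda>n. d n E) \<longlongrightarrow> \<nu> E) (ultrafilter_filter U)" for E
    unfolding \<nu>_def d_def using window_density_range[OF F]
    by (intro ultrafilter_filter_tendsto_Lim[OF U(1) compact_Icc])
  have "\<forall>\<^sub>F n in ultrafilter_filter U. d n B \<le> d n A"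
    using x unfolding d_def by (intro always_eventually allI divide_right_mono) simp_all
  then have "\<nu> B \<le> \<nu> A" by (rule tendsto_le[OF ultrafilter_filter_neq_bot[OF U(1)] lim lim])
  with \<open>fa_inv_prob \<nu>\<close> show False using less by (meson not_less)
qed

lemma mem_set_plus_singleton_iff: "y \<in> F + {x} \<longleftrightarrow> x \<in> (\<lambda>s. - s + y) ` (F :: 'g::group_add set)"
proof
  assume "y \<in> F + {x}"
  then obtain s where "s \<in> F" "y = s + x" by (auto simp: set_plus_def)
  then have "x = - s + y" by (simp add: add.assoc[symmetric])
  then show "x \<in> (\<lambda>s. - s + y) ` F" using \<open>s \<in> F\<close> by blast
next
  assume "x \<in> (\<lambda>s. - s + y) ` F"
  then obtain s where "s \<in> F" "x = - s + y" by blast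
  then have "y = s + x" by (simp add: add.assoc[symmetric])
  then show "y \<in> F + {x}" using \<open>s \<in> F\<close> unfolding set_plus_singleton_eq_image by blast
qed

lemma sum_card_Int_windows:
  fixes F X Y :: "'g::group_add set"
  assumes "finite X" "finite Y"
  shows "(\<Sum>x\<in>X. card (Y \<inter> (F + {x}))) = (\<Sum>y\<in>Y. card (X \<inter> (\<lambda>s. - s + y) ` F))"
proof -
  have "(\<Sum>x\<in>X. card (Y \<inter> (F + {x}))) = (\<Sum>x\<in>X. \<Sum>y\<in>Y. of_bool (y \<in> F + {x}))"
    using assms(2) by (simp add: Collect_mem_eq)
  also have "\<dots> = (\<Sum>y\<in>Y. \<Sum>x\<in>X. of_bool (x \<in> (\<lambda>s. - s + y) ` F))"
    by (subst sum.swap) (simp only: mem_set_plus_singleton_iff)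
  also have "\<dots> = (\<Sum>y\<in>Y. card (X \<inter> (\<lambda>s. - s + y) ` F))"
    using assms(1) by (simp add: Collect_mem_eq)
  finally show ?thesis .
qed

lemma Hall_condition_of_uniform_windows:
  fixes A B F S :: "'g::group_add set"
  assumes F: "finite F" "F \<noteq> {}" and unif: "\<forall>x. card (A \<inter> (F + {x})) < card (B \<inter> (F + {x}))"
    and S: "S \<subseteq> A" "finite S"
  shows "card S \<le> card (\<Union>a\<in>S. B \<inter> ({s - t |s t. s \<in> F \<and> t \<in> F} + {a}))"
proof (cases "S = {}")
  case False
  define M where "M = (\<Union>a\<in>S. B \<inter> ({s - t |s t. s \<in> F \<and> t \<in> F} + {a}))"
  define X where "X = {- t + a |t a. t \<in> F \<and> a \<in> S}"
  have X: "finite X" "X \<noteq> {}" unfolding X_def using F S False by (auto simp: finite_image_set2)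
  have "finite {s - t |s t. s \<in> F \<and> t \<in> F}" using F(1) by (simp add: finite_image_set2)
  then have "finite M" unfolding M_def using S(2) by (auto simp: finite_set_plus)
  have card_translate: "card ((\<lambda>s. - s + y) ` F) = card F" for y
    by (rule card_image) (simp add: inj_on_def)
  have window_in_M: "B \<inter> (F + {x}) \<subseteq> M \<inter> (F + {x})" if "x \<in> X" for x
  proof
    fix y assume y: "y \<in> B \<inter> (F + {x})"
    obtain t a where ta: "t \<in> F" "a \<in> S" "x = - t + a" using \<open>x \<in> X\<close> unfolding X_def by blast
    obtain s where s: "s \<in> F" "y = s + x" using y unfolding set_plus_singleton_eq_image by blast
    have "y = (s - t) + a" using s(2) ta(3) by (metis add.assoc diff_conv_add_uminus)
    then have "y \<in> {s - t |s t. s \<in> F \<and> t \<in> F} + {a}" using s(1) ta(1) by (auto simp: set_plus_def)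
    then show "y \<in> M \<inter> (F + {x})" using y ta(2) unfolding M_def by blast
  qed
  have "card F * card S = (\<Sum>y\<in>S. card (X \<inter> (\<lambda>s. - s + y) ` F))"
  proof -
    have "X \<inter> (\<lambda>s. - s + y) ` F = (\<lambda>s. - s + y) ` F" if "y \<in> S" for y
      using that unfolding X_def by force
    then show ?thesis by (simp add: card_translate)
  qed
  also have "\<dots> = (\<Sum>x\<in>X. card (S \<inter> (F + {x})))" using sum_card_Int_windows[OF X(1) S(2)] ..
  also have "\<dots> \<le> (\<Sum>x\<in>X. card (A \<inter> (F + {x})))"
    using S(1) by (intro sum_mono card_mono) (auto simp: finite_set_plus F(1))
  also have "\<dots> < (\<Sum>x\<in>X. card (B \<inter> (F + {x})))" using X unif by (intro sum_strict_mono) auto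
  also have "\<dots> \<le> (\<Sum>x\<in>X. card (M \<inter> (F + {x})))"
    using window_in_M \<open>finite M\<close> by (intro sum_mono card_mono) auto
  also have "\<dots> = (\<Sum>y\<in>M. card (X \<inter> (\<lambda>s. - s + y) ` F))" using sum_card_Int_windows[OF X(1) \<open>finite M\<close>] .
  also have "\<dots> \<le> (\<Sum>y\<in>M. card F)" using card_translate by (intro sum_mono) (metis card_mono F(1) finite_imageI inf_le2)
  finally have "card F * card S < card F * card M" by (simp add: mult.commute)
  then show ?thesis unfolding M_def by simp
qed simp

definition subequidecomposable :: "'g::group_add set \<Rightarrow> 'g set \<Rightarrow> bool" where
  "subequidecomposable A B \<longleftrightarrow>
     (\<exists>(n::nat) (P::nat \<Rightarrow> 'g set) (\<gamma>::nat \<Rightarrow> 'g).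
        A = (\<Union>i<n. P i) \<and>
        (\<forall>i<n. \<forall>j<n. i \<noteq> j \<longrightarrow> P i \<inter> P j = {}) \<and>
        (\<forall>i<n. (\<lambda>x. \<gamma> i + x) ` P i \<subseteq> B) \<and>
        (\<forall>i<n. \<forall>j<n. i \<noteq> j \<longrightarrow> (\<lambda>x. \<gamma> i + x) ` P i \<inter> (\<lambda>x. \<gamma> j + x) ` P j = {}))"

lemma subequidecomposable_of_bounded_injection:
  fixes A B D :: "'g::group_add set"
  assumes \<phi>: "inj_on \<phi> A" "\<phi> ` A \<subseteq> B" and D: "finite D" "\<forall>a\<in>A. \<phi> a - a \<in> D"
  shows "subequidecomposable A B"
proof -
  obtain h where "bij_betw h {..<card D} D"
    using ex_bij_betw_nat_finite[OF D(1)] by (auto simp: atLeast0LessThan)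
  then have h_inj: "inj_on h {..<card D}" and h_onto: "h ` {..<card D} = D"
    by (simp_all add: bij_betw_def)
  define P where "P i = {a \<in> A. \<phi> a - a = h i}" for i
  have translate: "h i + a = \<phi> a" if "a \<in> P i" for i a
    using that unfolding P_def by (metis (mono_tags, lifting) diff_add_cancel mem_Collect_eq)
  have h_neq: "h i \<noteq> h j" if "i < card D" "j < card D" "i \<noteq> j" for i j
    using inj_onD[OF h_inj] that by blast
  have "A \<subseteq> (\<Union>i<card D. P i)"
  proof
    fix a assume "a \<in> A"
    then have "\<phi> a - a \<in> h ` {..<card D}" using D(2) h_onto by simp
    then obtain i where "i < card D" "h i = \<phi> a - a" by auto
    then show "a \<in> (\<Union>i<card D. P i)" using \<open>a \<in> A\<close> unfolding P_def by (intro UN_I[of i]) auto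
  qed
  then have "A = (\<Union>i<card D. P i)" unfolding P_def by auto
  moreover have "P i \<inter> P j = {}" if "i < card D" "j < card D" "i \<noteq> j" for i j
    using h_neq[OF that] unfolding P_def by auto
  moreover have "(+) (h i) ` P i \<subseteq> B" for i
    using translate \<phi>(2) unfolding P_def by blast
  moreover have "(+) (h i) ` P i \<inter> (+) (h j) ` P j = {}" if "i < card D" "j < card D" "i \<noteq> j" for i j
  proof (rule ccontr)
    assume "(+) (h i) ` P i \<inter> (+) (h j) ` P j \<noteq> {}"
    then obtain a a' where a: "a \<in> P i" "a' \<in> P j" "h i + a = h j + a'" by blast
    then have "\<phi> a = \<phi> a'" "a \<in> A" "a' \<in> A" using translate unfolding P_def by auto
    then have "a = a'" using \<phi>(1) by (auto dest: inj_onD)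
    then show False using a(3) h_neq[OF that] by simp
  qed
  ultimately show ?thesis
    unfolding subequidecomposable_def by (intro exI[of _ "card D"] exI[of _ P] exI[of _ h]) auto
qed

lemma subequidecomposable_if_mean_less:
  fixes A B :: "'g::group_add set"
  assumes "countable (UNIV :: 'g set)" "amenable TYPE('g)"
    and "\<forall>\<nu>. fa_inv_prob \<nu> \<longrightarrow> \<nu> A < \<nu> B"
  shows "subequidecomposable A B"
proof -
  obtain F where F: "finite F" "F \<noteq> {}" "\<forall>x. card (A \<inter> (F + {x})) < card (B \<inter> (F + {x}))"
    using uniform_window_comparison[OF assms] by blast
  define D where "D = {s - t |s t. s \<in> F \<and> t \<in> F}"
  have "finite D" unfolding D_def using F(1) by (simp add: finite_image_set2)
  have "\<exists>\<phi>. inj_on \<phi> A \<and> (\<forall>a\<in>A. \<phi> a \<in> B \<inter> (D + {a}))"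
  proof (rule Hall_marriage)
    show "\<forall>a\<in>A. finite (B \<inter> (D + {a}))" using \<open>finite D\<close> by (simp add: finite_set_plus)
    show "\<forall>S\<subseteq>A. finite S \<longrightarrow> card S \<le> card (\<Union>a\<in>S. B \<inter> (D + {a}))"
      unfolding D_def using Hall_condition_of_uniform_windows[OF F] by blast
  qed
  then obtain \<phi> where \<phi>: "inj_on \<phi> A" "\<forall>a\<in>A. \<phi> a \<in> B \<inter> (D + {a})" by blast
  have "\<forall>a\<in>A. \<phi> a - a \<in> D" using \<phi>(2) by (auto simp: set_plus_def)
  moreover have "\<phi> ` A \<subseteq> B" using \<phi>(2) by blast
  ultimately show ?thesis using subequidecomposable_of_bounded_injection[OF \<phi>(1) _ \<open>finite D\<close>] by blast
qed

section \<open>The Stone-Cech compactification\<close>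

definition ultrafilters_containing :: "'g set \<Rightarrow> 'g set set set" where
  "ultrafilters_containing A = {U \<in> beta_space. A \<in> U}"

definition principal_ultrafilter :: "'g \<Rightarrow> 'g set set" where
  "principal_ultrafilter x = {A. x \<in> A}"

lemma mem_beta_space_iff: "U \<in> beta_space \<longleftrightarrow> is_ultrafilter_on U"
  unfolding beta_space_def by simp

lemma principal_ultrafilter_in_ultrafilters_containing_iff:
  "principal_ultrafilter x \<in> ultrafilters_containing A \<longleftrightarrow> x \<in> A"
  unfolding ultrafilters_containing_def mem_beta_space_iff is_ultrafilter_on_def principal_ultrafilter_def
  by auto

lemma ultrafilters_containing_subset_beta_space: "ultrafilters_containing A \<subseteq> beta_space"
  unfolding ultrafilters_containing_def by auto

lemma ultrafilters_containing_UNIV: "ultrafilters_containing UNIV = beta_space"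
  unfolding ultrafilters_containing_def by (auto simp: mem_beta_space_iff ultrafilter_UNIV)

lemma ultrafilters_containing_empty: "ultrafilters_containing {} = {}"
  unfolding ultrafilters_containing_def by (auto simp: mem_beta_space_iff ultrafilter_empty)

lemma ultrafilters_containing_Int:
  "ultrafilters_containing (A \<inter> B) = ultrafilters_containing A \<inter> ultrafilters_containing B"
  unfolding ultrafilters_containing_def by (auto simp: mem_beta_space_iff ultrafilter_Int_iff)

lemma ultrafilters_containing_Un:
  "ultrafilters_containing (A \<union> B) = ultrafilters_containing A \<union> ultrafilters_containing B"
  unfolding ultrafilters_containing_def by (auto simp: mem_beta_space_iff ultrafilter_Un_iff)

lemma ultrafilters_containing_Compl: "ultrafilters_containing (- A) = beta_space - ultrafilters_containing A"
  unfolding ultrafilters_containing_def by (auto simp: mem_beta_space_iff ultrafilter_Compl_iff)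

lemma ultrafilters_containing_UN:
  "finite I \<Longrightarrow> ultrafilters_containing (\<Union>i\<in>I. P i) = (\<Union>i\<in>I. ultrafilters_containing (P i))"
  by (induction I rule: finite_induct) (simp_all add: ultrafilters_containing_empty ultrafilters_containing_Un)

lemma ultrafilters_containing_subset_iff:
  "ultrafilters_containing A \<subseteq> ultrafilters_containing B \<longleftrightarrow> A \<subseteq> B"
proof
  assume sub: "ultrafilters_containing A \<subseteq> ultrafilters_containing B"
  show "A \<subseteq> B"
  proof
    fix x assume "x \<in> A"
    then have "principal_ultrafilter x \<in> ultrafilters_containing B"
      using sub principal_ultrafilter_in_ultrafilters_containing_iff[of x A] by blast
    then show "x \<in> B" by (simp add: principal_ultrafilter_in_ultrafilters_containing_iff)
  qed
next
  assume "A \<subseteq> B"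
  show "ultrafilters_containing A \<subseteq> ultrafilters_containing B"
  proof
    fix U assume "U \<in> ultrafilters_containing A"
    then have "is_ultrafilter_on U" "A \<in> U" unfolding ultrafilters_containing_def mem_beta_space_iff by auto
    then show "U \<in> ultrafilters_containing B"
      using ultrafilter_mono[OF _ _ \<open>A \<subseteq> B\<close>] unfolding ultrafilters_containing_def mem_beta_space_iff by blast
  qed
qed

lemma ultrafilters_containing_eq_empty_iff: "ultrafilters_containing A = {} \<longleftrightarrow> A = {}"
  using ultrafilters_containing_subset_iff[of A "{}"] by (auto simp: ultrafilters_containing_empty)

lemma beta_top_eq: "beta_top = topology_generated_by (range ultrafilters_containing)"
proof -
  have "{{U \<in> beta_space. A \<in> U} | A. True} = range ultrafilters_containing"
    unfolding ultrafilters_containing_def by auto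
  then show ?thesis unfolding beta_top_def by (rule arg_cong)
qed

lemma topspace_beta_top: "topspace beta_top = beta_space"
proof -
  have "\<Union>(range ultrafilters_containing) = beta_space"
    using ultrafilters_containing_subset_beta_space ultrafilters_containing_UNIV by blast
  then show ?thesis unfolding beta_top_eq by simp
qed

lemma openin_ultrafilters_containing: "openin beta_top (ultrafilters_containing A)"
  unfolding beta_top_eq by (rule topology_generated_by_Basis) auto

lemma clopenin_ultrafilters_containing: "clopenin beta_top (ultrafilters_containing A)"
  unfolding clopenin_def closedin_def topspace_beta_top
  using openin_ultrafilters_containing[of "- A"] ultrafilters_containing_subset_beta_space
  by (simp add: openin_ultrafilters_containing ultrafilters_containing_Compl)

lemma openin_beta_top_subset: "openin beta_top V \<Longrightarrow> V \<subseteq> beta_space"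
  using openin_subset topspace_beta_top by blast

lemma openin_beta_top_basis:
  assumes "openin beta_top V" "U \<in> V"
  obtains A where "U \<in> ultrafilters_containing A" "ultrafilters_containing A \<subseteq> V"
proof -
  have "generate_topology_on (range ultrafilters_containing) V"
    using assms(1) unfolding beta_top_eq by (rule openin_topology_generated_by)
  then have "\<exists>A. U \<in> ultrafilters_containing A \<and> ultrafilters_containing A \<subseteq> V"
    using assms(2)
  proof (induction arbitrary: U rule: generate_topology_on.induct)
    case (Int V1 V2)
    then have "U \<in> V1" "U \<in> V2" by auto
    then obtain A1 A2 where "U \<in> ultrafilters_containing A1" "ultrafilters_containing A1 \<subseteq> V1"
      "U \<in> ultrafilters_containing A2" "ultrafilters_containing A2 \<subseteq> V2" using Int.IH by meson
    then show ?case by (intro exI[of _ "A1 \<inter> A2"]) (auto simp: ultrafilters_containing_Int)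
  next
    case (UN K)
    then obtain k where "k \<in> K" "U \<in> k" by blast
    then obtain A where "U \<in> ultrafilters_containing A" "ultrafilters_containing A \<subseteq> k"
      using UN.IH by blast
    then show ?case using \<open>k \<in> K\<close> by blast
  qed auto
  then show ?thesis using that by blast
qed

lemma openin_subset_ultrafilters_containing_principal:
  assumes "openin beta_top C"
  shows "C \<subseteq> ultrafilters_containing {x. principal_ultrafilter x \<in> C}"
proof
  fix U assume "U \<in> C"
  then obtain D where D: "U \<in> ultrafilters_containing D" "ultrafilters_containing D \<subseteq> C"
    using openin_beta_top_basis[OF assms] by blast
  have "D \<subseteq> {x. principal_ultrafilter x \<in> C}"
    using D(2) principal_ultrafilter_in_ultrafilters_containing_iff[of _ D] by blast
  then show "U \<in> ultrafilters_containing {x. principal_ultrafilter x \<in> C}"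
    using D(1) ultrafilters_containing_subset_iff by blast
qed

lemma closedin_supset_ultrafilters_containing_principal:
  assumes "openin beta_top (beta_space - C)"
  shows "ultrafilters_containing {x. principal_ultrafilter x \<in> C} \<subseteq> C"
proof
  fix U assume U: "U \<in> ultrafilters_containing {x. principal_ultrafilter x \<in> C}"
  show "U \<in> C"
  proof (rule ccontr)
    assume "U \<notin> C"
    then have "U \<in> beta_space - C" using U ultrafilters_containing_subset_beta_space by blast
    then obtain E where E: "U \<in> ultrafilters_containing E" "ultrafilters_containing E \<subseteq> beta_space - C"
      using openin_beta_top_basis[OF assms] by blast
    have "E \<inter> {x. principal_ultrafilter x \<in> C} = {}"
      using E(2) principal_ultrafilter_in_ultrafilters_containing_iff[of _ E] by blast
    then have "U \<in> ultrafilters_containing {}"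
      using E(1) U by (metis IntI ultrafilters_containing_Int)
    then show False by (simp add: ultrafilters_containing_empty)
  qed
qed

lemma clopenin_beta_top_iff: "clopenin beta_top C \<longleftrightarrow> (\<exists>A. C = ultrafilters_containing A)"
proof
  assume "clopenin beta_top C"
  then have "openin beta_top C" "openin beta_top (beta_space - C)"
    unfolding clopenin_def closedin_def topspace_beta_top by auto
  then have "C = ultrafilters_containing {x. principal_ultrafilter x \<in> C}"
    using openin_subset_ultrafilters_containing_principal closedin_supset_ultrafilters_containing_principal
    by blast
  then show "\<exists>A. C = ultrafilters_containing A" by blast
qed (auto simp: clopenin_ultrafilters_containing)

text \<open>Compactness: otherwise \<open>A\<close> and the complements of the members of \<open>\<D>\<close> have the finite
  intersection property, and an ultrafilter containing them all lies in \<open>ultrafilters_containing A\<close>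
  but in none of the \<open>ultrafilters_containing D\<close>.\<close>

lemma ultrafilters_containing_finite_subcover:
  assumes "ultrafilters_containing A \<subseteq> (\<Union>D\<in>\<D>. ultrafilters_containing D)"
  shows "\<exists>\<D>'\<subseteq>\<D>. finite \<D>' \<and> A \<subseteq> \<Union>\<D>'"
proof (rule ccontr)
  assume contra: "\<not> ?thesis"
  have "finite_intersection_property (insert A (uminus ` \<D>))"
    unfolding finite_intersection_property_def
  proof (intro allI impI)
    fix \<G> assume \<G>: "\<G> \<subseteq> insert A (uminus ` \<D>) \<and> finite \<G>"
    then obtain \<D>' where \<D>': "\<D>' \<subseteq> \<D>" "finite \<D>'" "\<G> - {A} = uminus ` \<D>'"
      by (metis Diff_subset_conv finite_Diff finite_subset_image insert_is_Un)
    have "\<not> A \<subseteq> \<Union>\<D>'" using contra \<D>'(1,2) by blast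
    then have "A \<inter> \<Inter>(uminus ` \<D>') \<noteq> {}" by blast
    moreover have "A \<inter> \<Inter>(uminus ` \<D>') \<subseteq> \<Inter>\<G>" using \<D>'(3) by blast
    ultimately show "\<Inter>\<G> \<noteq> {}" by blast
  qed
  then obtain W where W: "is_ultrafilter_on W" "insert A (uminus ` \<D>) \<subseteq> W"
    by (rule ultrafilter_extending_fip)
  then have "W \<in> ultrafilters_containing A" unfolding ultrafilters_containing_def mem_beta_space_iff by simp
  then obtain D where "D \<in> \<D>" "D \<in> W" using assms unfolding ultrafilters_containing_def by blast
  moreover have "- D \<in> W" using W(2) \<open>D \<in> \<D>\<close> by blast
  ultimately show False using ultrafilter_Compl_iff[OF W(1)] by blast
qed

lemma ultrafilters_containing_open_cover_refine:
  assumes cover: "ultrafilters_containing A \<subseteq> \<Union>\<V>" and open_cover: "\<forall>V\<in>\<V>. openin beta_top V"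
  shows "\<exists>\<D>. finite \<D> \<and> A \<subseteq> \<Union>\<D> \<and> (\<forall>D\<in>\<D>. \<exists>V\<in>\<V>. ultrafilters_containing D \<subseteq> V)"
proof -
  define \<D> where "\<D> = {D. \<exists>V\<in>\<V>. ultrafilters_containing D \<subseteq> V}"
  have "ultrafilters_containing A \<subseteq> (\<Union>D\<in>\<D>. ultrafilters_containing D)"
  proof
    fix U assume "U \<in> ultrafilters_containing A"
    then obtain V where "V \<in> \<V>" "U \<in> V" using cover by blast
    moreover have "openin beta_top V" using open_cover \<open>V \<in> \<V>\<close> by blast
    then obtain D where "U \<in> ultrafilters_containing D" "ultrafilters_containing D \<subseteq> V"
      using openin_beta_top_basis \<open>U \<in> V\<close> by metis
    then show "U \<in> (\<Union>D\<in>\<D>. ultrafilters_containing D)" unfolding \<D>_def using \<open>V \<in> \<V>\<close> by blast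
  qed
  then obtain \<D>' where "\<D>' \<subseteq> \<D>" "finite \<D>'" "A \<subseteq> \<Union>\<D>'"
    by (meson ultrafilters_containing_finite_subcover)
  moreover have "\<forall>D\<in>\<D>'. \<exists>V\<in>\<V>. ultrafilters_containing D \<subseteq> V"
    using \<open>\<D>' \<subseteq> \<D>\<close> unfolding \<D>_def by auto
  ultimately show ?thesis by auto
qed

lemma compactin_ultrafilters_containing: "compactin beta_top (ultrafilters_containing A)"
  unfolding compactin_def
proof (intro conjI allI impI)
  show "ultrafilters_containing A \<subseteq> topspace beta_top"
    by (simp add: topspace_beta_top ultrafilters_containing_subset_beta_space)
  fix \<V> assume \<V>: "(\<forall>V\<in>\<V>. openin beta_top V) \<and> ultrafilters_containing A \<subseteq> \<Union>\<V>"
  obtain \<D> where \<D>: "finite \<D>" "A \<subseteq> \<Union>\<D>" "\<forall>D\<in>\<D>. \<exists>V\<in>\<V>. ultrafilters_containing D \<subseteq> V"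
    using ultrafilters_containing_open_cover_refine[of A \<V>] \<V> by blast
  have "\<forall>D\<in>\<D>. \<exists>V. V \<in> \<V> \<and> ultrafilters_containing D \<subseteq> V" using \<D>(3) by blast
  then obtain c where c: "\<forall>D\<in>\<D>. c D \<in> \<V> \<and> ultrafilters_containing D \<subseteq> c D"
    by (rule bchoice[THEN exE])
  have "ultrafilters_containing A \<subseteq> ultrafilters_containing (\<Union>D\<in>\<D>. D)"
    using \<D>(2) by (simp add: ultrafilters_containing_subset_iff)
  also have "\<dots> = (\<Union>D\<in>\<D>. ultrafilters_containing D)" by (rule ultrafilters_containing_UN[OF \<D>(1)])
  also have "\<dots> \<subseteq> \<Union>(c ` \<D>)" using c by blast
  finally show "\<exists>\<F>. finite \<F> \<and> \<F> \<subseteq> \<V> \<and> ultrafilters_containing A \<subseteq> \<Union>\<F>"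
    using c \<D>(1) by (intro exI[of _ "c ` \<D>"]) auto
qed

lemma Hausdorff_space_beta_top: "Hausdorff_space beta_top"
  unfolding Hausdorff_space_def topspace_beta_top
proof (intro allI impI)
  fix U V :: "'g set set" assume UV: "U \<in> beta_space \<and> V \<in> beta_space \<and> U \<noteq> V"
  then obtain A where "A \<in> U" "A \<notin> V"
    using ultrafilter_Compl_iff unfolding mem_beta_space_iff by blast
  then have "U \<in> ultrafilters_containing A" "V \<in> ultrafilters_containing (- A)"
    using UV ultrafilter_Compl_iff unfolding ultrafilters_containing_def mem_beta_space_iff by auto
  moreover have "disjnt (ultrafilters_containing A) (ultrafilters_containing (- A))"
    by (auto simp: disjnt_def ultrafilters_containing_Compl)
  ultimately show "\<exists>U' V'. openin beta_top U' \<and> openin beta_top V' \<and> U \<in> U' \<and> V \<in> V' \<and> disjnt U' V'"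
    using openin_ultrafilters_containing by blast
qed

lemma translate_uminus_cancel: "(+) (- g) ` (+) g ` A = (A :: 'g::group_add set)"
  by (simp add: image_image add.assoc[symmetric])

lemma mem_beta_action_iff: "E \<in> beta_action g U \<longleftrightarrow> (+) (- g) ` E \<in> U"
proof
  assume "E \<in> beta_action g U"
  then obtain A where "A \<in> U" "E = (+) g ` A" unfolding beta_action_def by auto
  then show "(+) (- g) ` E \<in> U" by (simp add: translate_uminus_cancel)
next
  assume "(+) (- g) ` E \<in> U"
  moreover have "E = (+) g ` (+) (- g) ` E" using translate_uminus_cancel[of "- g" E] by simp
  ultimately show "E \<in> beta_action g U" unfolding beta_action_def by blast
qed

lemma bij_translate: "bij ((+) (g :: 'g::group_add))"
  unfolding bij_def by (auto simp: inj_on_def intro: surjI[of _ "\<lambda>x. - g + x"])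

lemma beta_action_in_beta_space:
  assumes "U \<in> beta_space"
  shows "beta_action g U \<in> beta_space"
proof -
  have U: "is_ultrafilter_on U" using assms by (simp add: mem_beta_space_iff)
  have bij: "bij ((+) (- g))" by (rule bij_translate)
  then have inj: "inj ((+) (- g))" by (rule bij_is_inj)
  have "is_ultrafilter_on (beta_action g U)"
    unfolding is_ultrafilter_on_def mem_beta_action_iff
  proof (intro conjI allI impI)
    show "(+) (- g) ` {} \<notin> U" using ultrafilter_empty[OF U] by simp
    show "(+) (- g) ` UNIV \<in> U" using ultrafilter_UNIV[OF U] bij by (simp add: bij_def)
    show "(+) (- g) ` (A \<inter> B) \<in> U" if "(+) (- g) ` A \<in> U \<and> (+) (- g) ` B \<in> U" for A B
      using that by (simp add: image_Int[OF inj] ultrafilter_Int_iff[OF U])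
    show "(+) (- g) ` B \<in> U" if "(+) (- g) ` A \<in> U \<and> A \<subseteq> B" for A B
      using that ultrafilter_mono[OF U] image_mono by metis
    show "(+) (- g) ` A \<in> U \<or> (+) (- g) ` (- A) \<in> U" for A
      using ultrafilter_Compl_iff[OF U] by (simp add: bij_image_Compl_eq[OF bij])
  qed
  then show ?thesis by (simp add: mem_beta_space_iff)
qed

lemma beta_action_uminus_cancel: "beta_action (- g) (beta_action g U) = U"
  unfolding set_eq_iff mem_beta_action_iff by (simp add: translate_uminus_cancel)

lemma inj_beta_action: "inj (beta_action g)"
  by (metis injI beta_action_uminus_cancel)

lemma beta_action_image_ultrafilters_containing:
  "beta_action g ` ultrafilters_containing A = ultrafilters_containing ((+) g ` A)"
proof
  show "beta_action g ` ultrafilters_containing A \<subseteq> ultrafilters_containing ((+) g ` A)"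
    using beta_action_in_beta_space
    by (auto simp: ultrafilters_containing_def mem_beta_action_iff translate_uminus_cancel)
  show "ultrafilters_containing ((+) g ` A) \<subseteq> beta_action g ` ultrafilters_containing A"
  proof
    fix V assume V: "V \<in> ultrafilters_containing ((+) g ` A)"
    have "V = beta_action g (beta_action (- g) V)" using beta_action_uminus_cancel[of "- g" V] by simp
    moreover have "beta_action (- g) V \<in> ultrafilters_containing A"
      using V beta_action_in_beta_space
      by (auto simp: ultrafilters_containing_def mem_beta_action_iff translate_uminus_cancel)
    ultimately show "V \<in> beta_action g ` ultrafilters_containing A" by blast
  qed
qed

lemma beta_action_image_beta_space: "beta_action g ` beta_space = beta_space"
  using beta_action_image_ultrafilters_containing[of g UNIV] bij_translate[of g]
  by (simp add: ultrafilters_containing_UNIV bij_def)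

lemma openin_beta_action_image:
  assumes "openin beta_top V"
  shows "openin beta_top (beta_action g ` V)"
proof -
  have "generate_topology_on (range ultrafilters_containing) V"
    using assms unfolding beta_top_eq by (rule openin_topology_generated_by)
  then have "generate_topology_on (range ultrafilters_containing) (beta_action g ` V)"
  proof (induction rule: generate_topology_on.induct)
    case (Int a b)
    then show ?case by (simp add: image_Int[OF inj_beta_action] generate_topology_on.Int)
  next
    case (UN K)
    then show ?case by (auto simp: image_Union intro!: generate_topology_on.UN)
  next
    case (Basis s)
    then show ?case by (auto simp: beta_action_image_ultrafilters_containing intro: generate_topology_on.Basis)
  qed (simp add: generate_topology_on.Empty)
  then show ?thesis unfolding beta_top_eq by (simp add: openin_topology_generated_by_iff)
qed

lemma beta_action_image_borel:
  assumes "E \<in> borel_sets_of beta_top"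
  shows "beta_action g ` E \<in> borel_sets_of beta_top"
  using assms unfolding borel_sets_of_def topspace_beta_top
proof (induction rule: sigma_sets.induct)
  case (Basic a)
  then show ?case using openin_beta_action_image by (auto intro: sigma_sets.Basic)
next
  case (Compl a)
  have "beta_action g ` (beta_space - a) = beta_space - beta_action g ` a"
    using inj_beta_action beta_action_image_beta_space by (metis image_set_diff)
  then show ?case using Compl by (simp add: sigma_sets.Compl)
next
  case (Union a)
  then show ?case by (simp add: image_UN sigma_sets.Union)
qed (simp add: sigma_sets.Empty)

section \<open>Invariant Radon measures from invariant means\<close>

definition inner_content :: "('g set \<Rightarrow> real) \<Rightarrow> 'g set set set \<Rightarrow> ennreal" where
  "inner_content \<nu> V = (SUP A \<in> {A. ultrafilters_containing A \<subseteq> V}. ennreal (\<nu> A))"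

definition outer_content :: "('g set \<Rightarrow> real) \<Rightarrow> 'g set set set \<Rightarrow> ennreal" where
  "outer_content \<nu> E = (INF V \<in> {V. openin beta_top V \<and> E \<subseteq> V}. inner_content \<nu> V)"

lemma sigma_algebra_borel_beta: "sigma_algebra beta_space (borel_sets_of beta_top)"
  unfolding borel_sets_of_def topspace_beta_top
  by (rule sigma_algebra_sigma_sets) (auto dest: openin_beta_top_subset)

context
  fixes \<nu> :: "'g::group_add set \<Rightarrow> real"
  assumes \<nu>: "fa_inv_prob \<nu>"
begin

lemma inner_content_mono: "V1 \<subseteq> V2 \<Longrightarrow> inner_content \<nu> V1 \<le> inner_content \<nu> V2"
  unfolding inner_content_def by (rule SUP_subset_mono) auto

lemma inner_content_ultrafilters_containing: "inner_content \<nu> (ultrafilters_containing A) = ennreal (\<nu> A)"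
  unfolding inner_content_def
proof (rule antisym)
  show "(SUP C \<in> {C. ultrafilters_containing C \<subseteq> ultrafilters_containing A}. ennreal (\<nu> C)) \<le> ennreal (\<nu> A)"
    by (rule SUP_least) (simp add: ultrafilters_containing_subset_iff ennreal_leI mean_mono[OF \<nu>])
qed (rule SUP_upper, simp)

lemma outer_content_open: "openin beta_top V \<Longrightarrow> outer_content \<nu> V = inner_content \<nu> V"
  unfolding outer_content_def
  by (rule antisym) (auto intro: INF_lower INF_greatest inner_content_mono)

lemma outer_content_mono: "E1 \<subseteq> E2 \<Longrightarrow> outer_content \<nu> E1 \<le> outer_content \<nu> E2"
  unfolding outer_content_def by (rule INF_superset_mono) auto

lemma outer_content_ultrafilters_containing: "outer_content \<nu> (ultrafilters_containing A) = ennreal (\<nu> A)"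
  using outer_content_open[OF openin_ultrafilters_containing] inner_content_ultrafilters_containing by simp

lemma outer_content_empty: "outer_content \<nu> {} = 0"
  using outer_content_ultrafilters_containing[of "{}"] by (simp add: ultrafilters_containing_empty mean_empty[OF \<nu>])

lemma outer_content_le_open: "openin beta_top V \<Longrightarrow> E \<subseteq> V \<Longrightarrow> outer_content \<nu> E \<le> inner_content \<nu> V"
  unfolding outer_content_def by (rule INF_lower2[of V]) auto

text \<open>By compactness a clopen set inside a countable union of open sets lies in a finite union of clopen
  sets, each inside one of the open sets; finite subadditivity of \<open>\<nu>\<close> then gives countable subadditivity.\<close>

lemma inner_content_countable_subadditive:
  assumes "\<And>n. openin beta_top (V n)"
  shows "inner_content \<nu> (\<Union>n. V n) \<le> (\<Sum>n. inner_content \<nu> (V n))"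
  unfolding inner_content_def[of _ "\<Union>n. V n"]
proof (rule SUP_least)
  fix A assume "A \<in> {A. ultrafilters_containing A \<subseteq> (\<Union>n. V n)}"
  then obtain \<D> where \<D>: "finite \<D>" "A \<subseteq> \<Union>\<D>" "\<forall>D\<in>\<D>. \<exists>n. ultrafilters_containing D \<subseteq> V n"
    using ultrafilters_containing_open_cover_refine[of A "range V"] assms by auto
  then obtain N where N: "\<And>D. D \<in> \<D> \<Longrightarrow> ultrafilters_containing D \<subseteq> V (N D)" by metis
  define G where "G n = \<Union>{D\<in>\<D>. N D = n}" for n
  have GV: "ultrafilters_containing (G n) \<subseteq> V n" for n
  proof -
    have "ultrafilters_containing (G n) = (\<Union>D\<in>{D\<in>\<D>. N D = n}. ultrafilters_containing D)"
      unfolding G_def using ultrafilters_containing_UN[of "{D\<in>\<D>. N D = n}" id] \<D>(1) by simp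
    then show ?thesis using N by auto
  qed
  have "A \<subseteq> (\<Union>n\<in>N ` \<D>. G n)" using \<D>(2) unfolding G_def by blast
  then have "\<nu> A \<le> (\<Sum>n\<in>N ` \<D>. \<nu> (G n))"
    using mean_mono[OF \<nu>] mean_UN_le[OF \<nu>, of "N ` \<D>" G] \<D>(1) by (meson finite_imageI order_trans)
  then have "ennreal (\<nu> A) \<le> ennreal (\<Sum>n\<in>N ` \<D>. \<nu> (G n))" by (rule ennreal_leI)
  also have "\<dots> = (\<Sum>n\<in>N ` \<D>. ennreal (\<nu> (G n)))" using mean_nonneg[OF \<nu>] by simp
  also have "\<dots> \<le> (\<Sum>n\<in>N ` \<D>. inner_content \<nu> (V n))"
  proof (rule sum_mono)
    fix n show "ennreal (\<nu> (G n)) \<le> inner_content \<nu> (V n)"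
      unfolding inner_content_def using GV by (intro SUP_upper) auto
  qed
  also have "\<dots> \<le> (\<Sum>n. inner_content \<nu> (V n))" by (rule sum_le_suminf) (auto simp: \<D>(1))
  finally show "ennreal (\<nu> A) \<le> (\<Sum>n. inner_content \<nu> (V n))" .
qed

lemma outer_content_countable_subadditive: "outer_content \<nu> (\<Union>n. E n) \<le> (\<Sum>n. outer_content \<nu> (E n))"
proof (rule ennreal_le_epsilon)
  fix e :: real assume e: "0 < e" and fin: "(\<Sum>n. outer_content \<nu> (E n)) < top"
  have less: "outer_content \<nu> (E n) < outer_content \<nu> (E n) + e * (1/2)^Suc n" for n
    using e fin by (auto simp add: less_top dest!: ennreal_suminf_lessD)
  have "\<exists>V. openin beta_top V \<and> E n \<subseteq> V \<and> inner_content \<nu> V < outer_content \<nu> (E n) + e * (1/2)^Suc n" for n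
    using less[of n] unfolding outer_content_def[of _ "E n"] INF_less_iff by auto
  then obtain V where V: "\<And>n. openin beta_top (V n)" "\<And>n. E n \<subseteq> V n"
    "\<And>n. inner_content \<nu> (V n) < outer_content \<nu> (E n) + e * (1/2)^Suc n" by metis
  have "outer_content \<nu> (\<Union>n. E n) \<le> inner_content \<nu> (\<Union>n. V n)"
    by (rule outer_content_le_open) (use V in auto)
  also have "\<dots> \<le> (\<Sum>n. inner_content \<nu> (V n))" by (rule inner_content_countable_subadditive[OF V(1)])
  also have "\<dots> \<le> (\<Sum>n. outer_content \<nu> (E n) + e * (1/2)^Suc n)"
    by (intro suminf_le allI less_imp_le V(3)) auto
  also have "\<dots> = (\<Sum>n. outer_content \<nu> (E n)) + (\<Sum>n. ennreal e * ennreal ((1/2) ^ Suc n))"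
    using \<open>0 < e\<close> by (subst suminf_add[symmetric])
                       (auto simp del: ennreal_suminf_cmult simp add: ennreal_mult[symmetric])
  also have "\<dots> = (\<Sum>n. outer_content \<nu> (E n)) + e"
    unfolding ennreal_suminf_cmult
    by (subst suminf_ennreal_eq[OF zero_le_power power_half_series]) auto
  finally show "outer_content \<nu> (\<Union>n. E n) \<le> (\<Sum>n. outer_content \<nu> (E n)) + ennreal e" .
qed

lemma outer_measure_space_outer_content: "outer_measure_space (Pow beta_space) (outer_content \<nu>)"
  unfolding outer_measure_space_def positive_def increasing_def countably_subadditive_def
  using outer_content_empty outer_content_mono outer_content_countable_subadditive by (auto simp: comp_def)

lemma subadditive_outer_content: "subadditive (Pow beta_space) (outer_content \<nu>)"
proof -
  interpret sigma_algebra beta_space "Pow beta_space" by (rule sigma_algebra_Pow)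
  show ?thesis
    using outer_measure_space_outer_content unfolding outer_measure_space_def
    by (intro countably_subadditive_subadditive) auto
qed

lemma inner_content_split:
  assumes "ultrafilters_containing A \<subseteq> V"
  shows "ennreal (\<nu> A) + inner_content \<nu> (V \<inter> ultrafilters_containing (- A)) \<le> inner_content \<nu> V"
proof -
  have "ennreal (\<nu> A) + inner_content \<nu> (V \<inter> ultrafilters_containing (- A))
      = (SUP B \<in> {B. ultrafilters_containing B \<subseteq> V \<inter> ultrafilters_containing (- A)}. ennreal (\<nu> A) + ennreal (\<nu> B))"
    unfolding inner_content_def
    by (rule ennreal_SUP_add_right) (use ultrafilters_containing_empty in blast)
  also have "\<dots> \<le> inner_content \<nu> V"
  proof (rule SUP_least)
    fix B assume B: "B \<in> {B. ultrafilters_containing B \<subseteq> V \<inter> ultrafilters_containing (- A)}"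
    then have "ultrafilters_containing (A \<inter> B) = {}"
      by (auto simp: ultrafilters_containing_Int ultrafilters_containing_Compl)
    then have "A \<inter> B = {}" by (simp add: ultrafilters_containing_eq_empty_iff)
    then have "ennreal (\<nu> A) + ennreal (\<nu> B) = ennreal (\<nu> (A \<union> B))"
      using mean_Un_disjoint[OF \<nu>] mean_nonneg[OF \<nu>] by (simp add: ennreal_plus)
    also have "\<dots> \<le> inner_content \<nu> V"
      unfolding inner_content_def using assms B by (intro SUP_upper) (auto simp: ultrafilters_containing_Un)
    finally show "ennreal (\<nu> A) + ennreal (\<nu> B) \<le> inner_content \<nu> V" .
  qed
  finally show ?thesis .
qed

lemma outer_content_open_split:
  assumes W: "openin beta_top W" and "X \<subseteq> beta_space"
  shows "outer_content \<nu> (W \<inter> X) + outer_content \<nu> ((beta_space - W) \<inter> X) = outer_content \<nu> X"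
proof (rule antisym)
  show "outer_content \<nu> (W \<inter> X) + outer_content \<nu> ((beta_space - W) \<inter> X) \<le> outer_content \<nu> X"
    unfolding outer_content_def[of _ X]
  proof (rule INF_greatest)
    fix V assume V: "V \<in> {V. openin beta_top V \<and> X \<subseteq> V}"
    have "outer_content \<nu> (W \<inter> X) + outer_content \<nu> ((beta_space - W) \<inter> X)
        \<le> inner_content \<nu> (W \<inter> V) + outer_content \<nu> ((beta_space - W) \<inter> X)"
      using V W by (intro add_right_mono outer_content_le_open) auto
    also have "\<dots> = (SUP A \<in> {A. ultrafilters_containing A \<subseteq> W \<inter> V}. ennreal (\<nu> A) + outer_content \<nu> ((beta_space - W) \<inter> X))"
      unfolding inner_content_def by (rule ennreal_SUP_add_left[symmetric]) (use ultrafilters_containing_empty in blast)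
    also have "\<dots> \<le> inner_content \<nu> V"
    proof (rule SUP_least)
      fix A assume A: "A \<in> {A. ultrafilters_containing A \<subseteq> W \<inter> V}"
      have "openin beta_top (V \<inter> ultrafilters_containing (- A))"
        using V openin_ultrafilters_containing by blast
      moreover have "(beta_space - W) \<inter> X \<subseteq> V \<inter> ultrafilters_containing (- A)"
        using A V by (auto simp: ultrafilters_containing_Compl)
      ultimately have "outer_content \<nu> ((beta_space - W) \<inter> X) \<le> inner_content \<nu> (V \<inter> ultrafilters_containing (- A))"
        by (rule outer_content_le_open)
      then have "ennreal (\<nu> A) + outer_content \<nu> ((beta_space - W) \<inter> X)
          \<le> ennreal (\<nu> A) + inner_content \<nu> (V \<inter> ultrafilters_containing (- A))"
        by (rule add_left_mono)
      also have "\<dots> \<le> inner_content \<nu> V" using A by (intro inner_content_split) auto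
      finally show "ennreal (\<nu> A) + outer_content \<nu> ((beta_space - W) \<inter> X) \<le> inner_content \<nu> V" .
    qed
    finally show "outer_content \<nu> (W \<inter> X) + outer_content \<nu> ((beta_space - W) \<inter> X) \<le> inner_content \<nu> V" .
  qed
  have "X = (W \<inter> X) \<union> ((beta_space - W) \<inter> X)" using assms(2) by blast
  then show "outer_content \<nu> X \<le> outer_content \<nu> (W \<inter> X) + outer_content \<nu> ((beta_space - W) \<inter> X)"
    using subadditiveD[OF subadditive_outer_content, of "W \<inter> X" "(beta_space - W) \<inter> X"] assms(2) by auto
qed

lemma measure_space_outer_content: "measure_space beta_space (borel_sets_of beta_top) (outer_content \<nu>)"
proof -
  define L where "L = lambda_system beta_space (Pow beta_space) (outer_content \<nu>)"
  have ms: "measure_space beta_space L (outer_content \<nu>)"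
    unfolding L_def using sigma_algebra.caratheodory_lemma[OF sigma_algebra_Pow outer_measure_space_outer_content] .
  have "Collect (openin beta_top) \<subseteq> L"
    unfolding L_def lambda_system_def using outer_content_open_split openin_beta_top_subset by auto
  then have "borel_sets_of beta_top \<subseteq> L"
    unfolding borel_sets_of_def topspace_beta_top
    using sigma_algebra.sigma_sets_subset[of beta_space L] ms by (simp add: measure_space_def)
  then show ?thesis using measure_down[OF ms sigma_algebra_borel_beta] by simp
qed

lemma inner_content_beta_action_le: "inner_content \<nu> (beta_action g ` V) \<le> inner_content \<nu> V"
  unfolding inner_content_def[of _ "beta_action g ` V"]
proof (rule SUP_least)
  fix A assume A: "A \<in> {A. ultrafilters_containing A \<subseteq> beta_action g ` V}"
  have "beta_action (- g) ` ultrafilters_containing A \<subseteq> beta_action (- g) ` beta_action g ` V" using A by blast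
  then have "ultrafilters_containing ((+) (- g) ` A) \<subseteq> V"
    by (simp add: image_image beta_action_uminus_cancel beta_action_image_ultrafilters_containing)
  then have "ennreal (\<nu> ((+) (- g) ` A)) \<le> inner_content \<nu> V" unfolding inner_content_def by (intro SUP_upper) auto
  then show "ennreal (\<nu> A) \<le> inner_content \<nu> V" by (simp add: mean_translate[OF \<nu>])
qed

lemma outer_content_beta_action_le: "outer_content \<nu> (beta_action g ` E) \<le> outer_content \<nu> E"
  unfolding outer_content_def[of _ E]
proof (rule INF_greatest)
  fix V assume V: "V \<in> {V. openin beta_top V \<and> E \<subseteq> V}"
  have "outer_content \<nu> (beta_action g ` E) \<le> inner_content \<nu> (beta_action g ` V)"
    using V by (intro outer_content_le_open openin_beta_action_image) auto
  also have "\<dots> \<le> inner_content \<nu> V" by (rule inner_content_beta_action_le)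
  finally show "outer_content \<nu> (beta_action g ` E) \<le> inner_content \<nu> V" .
qed

lemma outer_content_beta_action: "outer_content \<nu> (beta_action g ` E) = outer_content \<nu> E"
proof (rule antisym)
  have "outer_content \<nu> (beta_action (- g) ` (beta_action g ` E)) \<le> outer_content \<nu> (beta_action g ` E)"
    by (rule outer_content_beta_action_le)
  then show "outer_content \<nu> E \<le> outer_content \<nu> (beta_action g ` E)"
    by (simp add: image_image beta_action_uminus_cancel)
qed (rule outer_content_beta_action_le)

end

definition mean_measure :: "('g::group_add set \<Rightarrow> real) \<Rightarrow> 'g set set measure" where
  "mean_measure \<nu> = measure_of beta_space (borel_sets_of beta_top) (outer_content \<nu>)"

lemma openin_borel_beta: "openin beta_top U \<Longrightarrow> U \<in> borel_sets_of beta_top"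
  unfolding borel_sets_of_def by (auto intro: sigma_sets.Basic)

lemma closedin_borel_beta:
  assumes "closedin beta_top K"
  shows "K \<in> borel_sets_of beta_top"
proof -
  have "K \<subseteq> beta_space" "openin beta_top (beta_space - K)"
    using assms unfolding closedin_def topspace_beta_top by auto
  then have "beta_space - (beta_space - K) \<in> borel_sets_of beta_top"
    unfolding borel_sets_of_def topspace_beta_top by (auto intro: sigma_sets.Basic sigma_sets.Compl)
  then show ?thesis using \<open>K \<subseteq> beta_space\<close> by (simp add: double_diff)
qed

context
  fixes \<nu> :: "'g::group_add set \<Rightarrow> real"
  assumes \<nu>: "fa_inv_prob \<nu>"
begin

lemma sets_mean_measure: "sets (mean_measure \<nu>) = borel_sets_of beta_top"
  unfolding mean_measure_def using sigma_algebra.sets_measure_of_eq[OF sigma_algebra_borel_beta] .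

lemma space_mean_measure: "space (mean_measure \<nu>) = beta_space"
  unfolding mean_measure_def by (rule space_measure_of_conv)

lemma emeasure_mean_measure: "E \<in> borel_sets_of beta_top \<Longrightarrow> emeasure (mean_measure \<nu>) E = outer_content \<nu> E"
  unfolding mean_measure_def using measure_space_outer_content[OF \<nu>] sigma_algebra_borel_beta
  by (intro emeasure_measure_of_sigma) (auto simp: measure_space_def)

lemma emeasure_mean_measure_ultrafilters_containing:
  "emeasure (mean_measure \<nu>) (ultrafilters_containing A) = ennreal (\<nu> A)"
  using emeasure_mean_measure[OF openin_borel_beta[OF openin_ultrafilters_containing]]
    outer_content_ultrafilters_containing[OF \<nu>] by simp

lemma measure_mean_measure_ultrafilters_containing: "measure (mean_measure \<nu>) (ultrafilters_containing A) = \<nu> A"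
  using emeasure_mean_measure_ultrafilters_containing mean_nonneg[OF \<nu>] by (simp add: measure_def)

lemma radon_prob_mean_measure: "radon_prob beta_top (mean_measure \<nu>)"
  unfolding radon_prob_def
proof (intro conjI ballI allI impI)
  show "prob_space (mean_measure \<nu>)"
    using emeasure_mean_measure_ultrafilters_containing[of UNIV] mean_UNIV[OF \<nu>]
    by (intro prob_spaceI) (simp add: space_mean_measure ultrafilters_containing_UNIV)
  show "space (mean_measure \<nu>) = topspace beta_top" by (simp add: space_mean_measure topspace_beta_top)
  show "sets (mean_measure \<nu>) = borel_sets_of beta_top" by (rule sets_mean_measure)
next
  fix E assume "E \<in> sets (mean_measure \<nu>)"
  then have "emeasure (mean_measure \<nu>) E = outer_content \<nu> E" by (simp add: sets_mean_measure emeasure_mean_measure)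
  also have "\<dots> = (INF V \<in> {V. openin beta_top V \<and> E \<subseteq> V}. emeasure (mean_measure \<nu>) V)"
    unfolding outer_content_def
    by (rule INF_cong) (auto simp: emeasure_mean_measure openin_borel_beta outer_content_open[OF \<nu>])
  finally show "emeasure (mean_measure \<nu>) E = (INF V \<in> {V. openin beta_top V \<and> E \<subseteq> V}. emeasure (mean_measure \<nu>) V)" .
next
  fix V :: "'g set set set" assume V: "openin beta_top V"
  show "emeasure (mean_measure \<nu>) V = (SUP K \<in> {K. compactin beta_top K \<and> K \<subseteq> V}. emeasure (mean_measure \<nu>) K)"
  proof (rule antisym)
    have "emeasure (mean_measure \<nu>) V = inner_content \<nu> V"
      using emeasure_mean_measure[OF openin_borel_beta[OF V]] outer_content_open[OF \<nu> V] by simp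
    also have "\<dots> \<le> (SUP K \<in> {K. compactin beta_top K \<and> K \<subseteq> V}. emeasure (mean_measure \<nu>) K)"
      unfolding inner_content_def
    proof (rule SUP_least)
      fix A assume "A \<in> {A. ultrafilters_containing A \<subseteq> V}"
      then show "ennreal (\<nu> A) \<le> (SUP K \<in> {K. compactin beta_top K \<and> K \<subseteq> V}. emeasure (mean_measure \<nu>) K)"
        using compactin_ultrafilters_containing emeasure_mean_measure_ultrafilters_containing
        by (intro SUP_upper2[of "ultrafilters_containing A"]) auto
    qed
    finally show "emeasure (mean_measure \<nu>) V \<le> (SUP K \<in> {K. compactin beta_top K \<and> K \<subseteq> V}. emeasure (mean_measure \<nu>) K)" .
    show "(SUP K \<in> {K. compactin beta_top K \<and> K \<subseteq> V}. emeasure (mean_measure \<nu>) K) \<le> emeasure (mean_measure \<nu>) V"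
    proof (rule SUP_least)
      fix K assume K: "K \<in> {K. compactin beta_top K \<and> K \<subseteq> V}"
      then have "closedin beta_top K" using compactin_imp_closedin[OF Hausdorff_space_beta_top] by blast
      then show "emeasure (mean_measure \<nu>) K \<le> emeasure (mean_measure \<nu>) V"
        using K V by (intro emeasure_mono) (auto simp: sets_mean_measure closedin_borel_beta openin_borel_beta)
    qed
  qed
qed

lemma action_invariant_mean_measure: "action_invariant beta_action (mean_measure \<nu>)"
  unfolding action_invariant_def sets_mean_measure
  by (simp add: emeasure_mean_measure beta_action_image_borel outer_content_beta_action[OF \<nu>])

end

lemma mean_less_if_beta_measure_less:
  assumes "\<forall>\<mu>. radon_prob beta_top \<mu> \<and> action_invariant beta_action \<mu> \<longrightarrow>
      measure \<mu> (ultrafilters_containing A) < measure \<mu> (ultrafilters_containing B)"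
  shows "\<forall>\<nu>. fa_inv_prob \<nu> \<longrightarrow> \<nu> A < \<nu> (B :: 'g::group_add set)"
proof (intro allI impI)
  fix \<nu> :: "'g set \<Rightarrow> real" assume \<nu>: "fa_inv_prob \<nu>"
  have "measure (mean_measure \<nu>) (ultrafilters_containing A) < measure (mean_measure \<nu>) (ultrafilters_containing B)"
    using assms radon_prob_mean_measure[OF \<nu>] action_invariant_mean_measure[OF \<nu>] by blast
  then show "\<nu> A < \<nu> B" by (simp add: measure_mean_measure_ultrafilters_containing[OF \<nu>])
qed

lemma beta_pieces_if_subequidecomposable:
  fixes A B :: "'g::group_add set"
  assumes "subequidecomposable A B"
  shows "\<exists>(n::nat) (P::nat \<Rightarrow> 'g set set set) (\<gamma>::nat \<Rightarrow> 'g).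
            ultrafilters_containing A = (\<Union>i<n. P i) \<and>
            (\<forall>i<n. clopenin beta_top (P i)) \<and>
            (\<forall>i<n. \<forall>j<n. i \<noteq> j \<longrightarrow> P i \<inter> P j = {}) \<and>
            (\<forall>i<n. beta_action (\<gamma> i) ` P i \<subseteq> ultrafilters_containing B) \<and>
            (\<forall>i<n. \<forall>j<n. i \<noteq> j \<longrightarrow> beta_action (\<gamma> i) ` P i \<inter> beta_action (\<gamma> j) ` P j = {})"
proof -
  obtain n and P :: "nat \<Rightarrow> 'g set" and \<gamma> where
    pieces: "A = (\<Union>i<n. P i)" "\<forall>i<n. \<forall>j<n. i \<noteq> j \<longrightarrow> P i \<inter> P j = {}"
    "\<forall>i<n. (+) (\<gamma> i) ` P i \<subseteq> B"
    "\<forall>i<n. \<forall>j<n. i \<noteq> j \<longrightarrow> (+) (\<gamma> i) ` P i \<inter> (+) (\<gamma> j) ` P j = {}"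
    using assms unfolding subequidecomposable_def by (elim exE conjE) (rule that; assumption)
  have disjoint: "ultrafilters_containing C \<inter> ultrafilters_containing D = {}" if "C \<inter> D = {}" for C D :: "'g set"
    using that by (simp flip: ultrafilters_containing_Int add: ultrafilters_containing_empty)
  define Q where "Q i = ultrafilters_containing (P i)" for i
  have "ultrafilters_containing A = (\<Union>i<n. Q i)"
    unfolding pieces(1) Q_def by (simp add: ultrafilters_containing_UN)
  moreover have "\<forall>i<n. clopenin beta_top (Q i)"
    unfolding Q_def by (simp add: clopenin_ultrafilters_containing)
  moreover have "\<forall>i<n. \<forall>j<n. i \<noteq> j \<longrightarrow> Q i \<inter> Q j = {}"
    unfolding Q_def using pieces(2) disjoint by simp
  moreover have "\<forall>i<n. beta_action (\<gamma> i) ` Q i \<subseteq> ultrafilters_containing B"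
    unfolding Q_def beta_action_image_ultrafilters_containing
    using pieces(3) by (simp add: ultrafilters_containing_subset_iff)
  moreover have "\<forall>i<n. \<forall>j<n. i \<noteq> j \<longrightarrow> beta_action (\<gamma> i) ` Q i \<inter> beta_action (\<gamma> j) ` Q j = {}"
    unfolding Q_def beta_action_image_ultrafilters_containing using pieces(4) disjoint by simp
  ultimately show ?thesis by blast
qed

theorem dynamical_comparison_beta:
  assumes "countable (UNIV :: 'g::group_add set)" "amenable TYPE('g)"
  shows "dynamical_comparison (beta_top :: 'g set set topology) beta_action"
  unfolding dynamical_comparison_def
proof (intro allI impI, elim conjE)
  fix A' B' :: "'g set set set"
  assume "clopenin beta_top A'" "clopenin beta_top B'"
    and less: "\<forall>\<mu>. radon_prob beta_top \<mu> \<and> action_invariant beta_action \<mu> \<longrightarrow> measure \<mu> A' < measure \<mu> B'"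
  then obtain A B where A'B': "A' = ultrafilters_containing A" "B' = ultrafilters_containing B"
    by (auto simp: clopenin_beta_top_iff)
  then have "\<forall>\<nu>. fa_inv_prob \<nu> \<longrightarrow> \<nu> A < \<nu> B"
    using less by (intro mean_less_if_beta_measure_less) simp
  then have "subequidecomposable A B" by (rule subequidecomposable_if_mean_less[OF assms])
  then show "\<exists>(n::nat) (P::nat \<Rightarrow> 'g set set set) (\<gamma>::nat \<Rightarrow> 'g).
            A' = (\<Union>i<n. P i) \<and> (\<forall>i<n. clopenin beta_top (P i)) \<and>
            (\<forall>i<n. \<forall>j<n. i \<noteq> j \<longrightarrow> P i \<inter> P j = {}) \<and>
            (\<forall>i<n. beta_action (\<gamma> i) ` P i \<subseteq> B') \<and>
            (\<forall>i<n. \<forall>j<n. i \<noteq> j \<longrightarrow> beta_action (\<gamma> i) ` P i \<inter> beta_action (\<gamma> j) ` P j = {})"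
    unfolding A'B' by (rule beta_pieces_if_subequidecomposable)
qed

theorem theoremt:
  assumes "countable (UNIV :: 'g::group_add set)"
    and "amenable TYPE('g)"
  shows "dynamical_comparison (beta_top :: 'g set set topology) beta_action \<and>
    (\<forall>A B :: 'g set. (\<forall>\<mu>. fa_inv_prob \<mu> \<longrightarrow> \<mu> A < \<mu> B) \<longrightarrow>
       (\<exists>(n::nat) (P::nat \<Rightarrow> 'g set) (\<gamma>::nat \<Rightarrow> 'g).
          A = (\<Union>i<n. P i) \<and>
          (\<forall>i<n. \<forall>j<n. i \<noteq> j \<longrightarrow> P i \<inter> P j = {}) \<and>
          (\<forall>i<n. (\<lambda>x. \<gamma> i + x) ` P i \<subseteq> B) \<and>
          (\<forall>i<n. \<forall>j<n. i \<noteq> j \<longrightarrow> (\<lambda>x. \<gamma> i + x) ` P i \<inter> (\<lambda>x. \<gamma> j + x) ` P j = {})))"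
proof -
  have "\<forall>A B :: 'g set. (\<forall>\<mu>. fa_inv_prob \<mu> \<longrightarrow> \<mu> A < \<mu> B) \<longrightarrow> subequidecomposable A B"
    using subequidecomposable_if_mean_less[OF assms] by blast
  with dynamical_comparison_beta[OF assms] show ?thesis unfolding subequidecomposable_def by (rule conjI)
qed

end
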